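(* Let $\mathbb{K}$ be an algebraically closed field of characteristic zero, $\mathcal{C}\subset\mathbb{K}^2$ an affine irreducible plane curve, $A=(a,b)\in\mathbb{K}^2$, $d\in\mathbb{K}\setminus\{0\}$, and assume that $\mathcal{C}_0\neq\emptyset$ and that $\mathcal{C}$ is not a circle centered at $A$. Let $\mathcal{M}$ be an irreducible component of $\mathfrak{C}(\mathcal{C},A,d)$. Then: (1) $\mathcal{M}_0\neq\emptyset$; (2) $\mathcal{C}$ is an irreducible component of $\mathfrak{C}(\mathcal{M},A,d)$; (3) if $d'\in\mathbb{K}\setminus\{0\}$ with $d^2\neq d'^2$ and $\mathcal{M}'$ is an irreducible component of $\mathfrak{C}(\mathcal{M},A,d')$, then $\mathcal{M}'$ is a component of $\mathfrak{C}(\mathcal{C},A,d+d')$ or of $\mathfrak{C}(\mathcal{C},A,d-d')$.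
   Context: For an irreducible plane curve $\mathcal{D}$ defined by an irreducible polynomial $g(y_1,y_2)$, and $\delta\in\mathbb{K}\setminus\{0\}$: $\mathfrak{B}(\mathcal{D},A,\delta)\subset\mathbb{K}^2\times\mathbb{K}^2\times\mathbb{K}$ is the set of $(\bar x,\bar y,w)$ with $g(y_1,y_2)=0$, $(x_1-y_1)^2+(x_2-y_2)^2=\delta^2$, $(y_2-b)(x_1-y_1)-(y_1-a)(x_2-y_2)=0$, $w((y_1-a)^2+(y_2-b)^2)=1$; the conchoid $\mathfrak{C}(\mathcal{D},A,\delta)$ is the Zariski closure in $\mathbb{K}^2$ of the projection of $\mathfrak{B}(\mathcal{D},A,\delta)$ to the $\bar x$ coordinates. $\mathcal{D}_0=\{(p_1,p_2)\in\mathcal{D}:(p_1-a)^2+(p_2-b)^2\neq0\}$. A circle centered at $A$ of radius $r$ is the curve $(y_1-a)^2+(y_2-b)^2=r^2$. *)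

theory Defs
  imports "HOL-Computational_Algebra.Computational_Algebra"
begin

text \<open>Bivariate polynomials K[y1,y2] are represented as K[y1][y2], i.e. as 'a poly poly.\<close>

definition eval2 :: "'a::comm_semiring_1 poly poly \<Rightarrow> 'a \<times> 'a \<Rightarrow> 'a" where
  "eval2 f p = poly (map_poly (\<lambda>c. poly c (fst p)) f) (snd p)"

definition zero_set :: "'a::comm_semiring_1 poly poly \<Rightarrow> ('a \<times> 'a) set" where
  "zero_set f = {p. eval2 f p = 0}"

definition zclosed :: "('a::comm_semiring_1 \<times> 'a) set \<Rightarrow> bool" where
  "zclosed V \<longleftrightarrow> (\<exists>F. V = {p. \<forall>f\<in>F. eval2 f p = 0})"

definition zclosure :: "('a::comm_semiring_1 \<times> 'a) set \<Rightarrow> ('a \<times> 'a) set" where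
  "zclosure S = {p. \<forall>f. (\<forall>q\<in>S. eval2 f q = 0) \<longrightarrow> eval2 f p = 0}"

definition zirreducible :: "('a::comm_semiring_1 \<times> 'a) set \<Rightarrow> bool" where
  "zirreducible V \<longleftrightarrow> zclosed V \<and> V \<noteq> {} \<and>
     (\<forall>V1 V2. zclosed V1 \<and> zclosed V2 \<and> V = V1 \<union> V2 \<longrightarrow> V = V1 \<or> V = V2)"

definition irred_component :: "('a::comm_semiring_1 \<times> 'a) set \<Rightarrow> ('a \<times> 'a) set \<Rightarrow> bool" where
  "irred_component V W \<longleftrightarrow> V \<subseteq> W \<and> zirreducible V \<and>
     (\<forall>V'. zirreducible V' \<and> V \<subseteq> V' \<and> V' \<subseteq> W \<longrightarrow> V' = V)"

definition conchoid_incidence ::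
  "('a::comm_ring_1 \<times> 'a) set \<Rightarrow> 'a \<times> 'a \<Rightarrow> 'a \<Rightarrow> (('a \<times> 'a) \<times> ('a \<times> 'a) \<times> 'a) set" where
  "conchoid_incidence D A \<delta> =
     {((x1, x2), (y1, y2), w). (y1, y2) \<in> D \<and>
        (x1 - y1)^2 + (x2 - y2)^2 = \<delta>^2 \<and>
        (y2 - snd A) * (x1 - y1) - (y1 - fst A) * (x2 - y2) = 0 \<and>
        w * ((y1 - fst A)^2 + (y2 - snd A)^2) = 1}"

definition conchoid :: "('a::comm_ring_1 \<times> 'a) set \<Rightarrow> 'a \<times> 'a \<Rightarrow> 'a \<Rightarrow> ('a \<times> 'a) set" where
  "conchoid D A \<delta> = zclosure (fst ` conchoid_incidence D A \<delta>)"

definition nonisotropic_part :: "('a::comm_ring_1 \<times> 'a) set \<Rightarrow> 'a \<times> 'a \<Rightarrow> ('a \<times> 'a) set" where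
  "nonisotropic_part D A = {p \<in> D. (fst p - fst A)^2 + (snd p - snd A)^2 \<noteq> 0}"

definition circle :: "'a::comm_ring_1 \<times> 'a \<Rightarrow> 'a \<Rightarrow> ('a \<times> 'a) set" where
  "circle A r = {p. (fst p - fst A)^2 + (snd p - snd A)^2 = r^2}"

end

theory Submission
  imports Defs
begin

text \<open>The conchoid correspondence \<open>y \<mapsto> y \<plusminus> d (y - A) / |y - A|\<close> is algebraic of degree two:
  a polynomial evaluated at the image of \<open>y\<close> is \<open>\<alpha> y \<plusminus> \<beta> y r\<close> with \<open>r\<^sup>2 = |y - A|\<^sup>2\<close>,
  so the conchoid lies on the curve \<open>\<alpha>\<^sup>2 - \<beta>\<^sup>2 |y - A|\<^sup>2 = 0\<close> and the correspondence
  commutes with Zariski closure. Hence every component \<open>M\<close> of the conchoid of \<open>C\<close> is an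
  irreducible curve containing infinitely many genuine conchoid points of \<open>C\<close>; since the
  correspondence is symmetric, \<open>C\<close> lies on the conchoid of \<open>M\<close>, and composing a step of
  length \<open>d\<close> with one of length \<open>d'\<close> along the same line gives a step of length
  \<open>d \<plusminus> d'\<close>. Finiteness of the fibres fails only for the centre \<open>A\<close>, whose preimages lie on the
  circle of radius \<open>d\<close>; this is why circles centred at \<open>A\<close> are excluded.\<close>

section \<open>Polynomial functions on the plane\<close>

lemma eval2_eq_poly_poly: "eval2 f p = poly (poly f [:snd p:]) (fst p)"
  by (cases p, induction f) (auto simp: eval2_def map_poly_pCons)

lemma eval2_add [simp]: "eval2 (f + g) p = eval2 f p + eval2 g p"
  by (simp add: eval2_eq_poly_poly)

lemma eval2_diff [simp]: "eval2 (f - g) p = eval2 f p - eval2 (g :: 'a::comm_ring_1 poly poly) p"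
  by (simp add: eval2_eq_poly_poly)

lemma eval2_mult [simp]: "eval2 (f * g) p = eval2 f p * eval2 g p"
  by (simp add: eval2_eq_poly_poly)

lemma eval2_power [simp]: "eval2 (f ^ n) p = eval2 f p ^ n"
  by (induction n) (auto simp: eval2_eq_poly_poly)

lemma eval2_pCons0 [simp]: "eval2 [:h:] p = poly h (fst p)"
  by (simp add: eval2_eq_poly_poly)

lemma eval2_snd [simp]: "eval2 [:0, 1:] p = snd p"
  by (simp add: eval2_eq_poly_poly)

lemma eval2_0 [simp]: "eval2 0 p = 0"
  by (simp add: eval2_eq_poly_poly)

lemma eval2_1 [simp]: "eval2 1 p = 1"
  by (simp add: eval2_def map_poly_1)

lemma zero_set_iff [simp]: "p \<in> zero_set f \<longleftrightarrow> eval2 f p = 0"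
  by (simp add: zero_set_def)

lemma poly_poly_eq_eval2: "poly (poly f u) x = eval2 f (x, poly u x)"
  by (induction f) (simp_all add: eval2_def map_poly_pCons)

definition polyfun :: "('a::comm_ring_1 \<times> 'a \<Rightarrow> 'a) \<Rightarrow> bool" where
  "polyfun \<phi> \<longleftrightarrow> (\<exists>f. \<phi> = eval2 f)"

lemma polyfun_const [intro]: "polyfun (\<lambda>p. c)"
  unfolding polyfun_def by (rule exI[of _ "[:[:c:]:]"]) auto

lemma polyfun_fst [intro]: "polyfun fst"
  unfolding polyfun_def by (rule exI[of _ "[:[:0, 1:]:]"]) auto

lemma polyfun_snd [intro]: "polyfun snd"
  unfolding polyfun_def by (rule exI[of _ "[:0, 1:]"]) auto

lemma polyfun_add [intro]: "polyfun \<phi> \<Longrightarrow> polyfun \<psi> \<Longrightarrow> polyfun (\<lambda>p. \<phi> p + \<psi> p)"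
  unfolding polyfun_def by (clarify, rule exI, rule ext, rule eval2_add [symmetric])

lemma polyfun_diff [intro]: "polyfun \<phi> \<Longrightarrow> polyfun \<psi> \<Longrightarrow> polyfun (\<lambda>p. \<phi> p - \<psi> p)"
  unfolding polyfun_def by (clarify, rule exI, rule ext, rule eval2_diff [symmetric])

lemma polyfun_mult [intro]: "polyfun \<phi> \<Longrightarrow> polyfun \<psi> \<Longrightarrow> polyfun (\<lambda>p. \<phi> p * \<psi> p)"
  unfolding polyfun_def by (clarify, rule exI, rule ext, rule eval2_mult [symmetric])

lemma polyfun_power [intro]: "polyfun \<phi> \<Longrightarrow> polyfun (\<lambda>p. \<phi> p ^ n)"
  unfolding polyfun_def by (clarify, rule exI, rule ext, rule eval2_power [symmetric])

lemma eval2_induct [case_names const fst snd add mult]: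
  fixes P :: "('a::comm_ring_1 \<times> 'a \<Rightarrow> 'a) \<Rightarrow> bool"
  assumes const: "\<And>c. P (\<lambda>p. c)" and fst: "P fst" and snd: "P snd"
    and add: "\<And>\<phi> \<psi>. P \<phi> \<Longrightarrow> P \<psi> \<Longrightarrow> P (\<lambda>p. \<phi> p + \<psi> p)"
    and mult: "\<And>\<phi> \<psi>. P \<phi> \<Longrightarrow> P \<psi> \<Longrightarrow> P (\<lambda>p. \<phi> p * \<psi> p)"
  shows "P (eval2 f)"
proof -
  have coeff: "P (\<lambda>p. poly c (fst p))" for c :: "'a poly"
  proof (induction c)
    case 0
    then show ?case using const[of 0] by simp
  next
    case (pCons a c)
    have "P (\<lambda>p. a + fst p * poly c (fst p))"
      by (intro add mult const fst pCons.IH)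
    then show ?case by simp
  qed
  show ?thesis
  proof (induction f)
    case 0
    then show ?case using const[of 0] by (simp add: fun_eq_iff)
  next
    case (pCons a f)
    have "eval2 (pCons a f) = (\<lambda>p. poly a (fst p) + snd p * eval2 f p)"
      by (auto simp: eval2_eq_poly_poly)
    then show ?case by (simp only:) (intro add mult coeff snd pCons.IH)
  qed
qed

section \<open>Zariski closed sets\<close>

lemma zclosed_zero_set [intro]: "zclosed (zero_set f)"
  unfolding zclosed_def zero_set_def by (rule exI[of _ "{f}"]) auto

lemma zclosed_empty [intro]: "zclosed ({} :: ('a::comm_ring_1 \<times> 'a) set)"
  unfolding zclosed_def by (rule exI[of _ "{1}"]) auto

lemma zclosure_subset: "S \<subseteq> zclosure S"
  by (auto simp: zclosure_def)

lemma zclosure_mono: "S \<subseteq> T \<Longrightarrow> zclosure S \<subseteq> zclosure T"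
  by (auto simp: zclosure_def)

lemma zclosed_zclosure [intro]: "zclosed (zclosure S)"
  unfolding zclosed_def zclosure_def by (rule exI[of _ "{f. \<forall>q\<in>S. eval2 f q = 0}"]) auto

lemma zclosure_minimal: "S \<subseteq> V \<Longrightarrow> zclosed V \<Longrightarrow> zclosure S \<subseteq> V"
  unfolding zclosed_def zclosure_def by blast

lemma zclosureI: "(\<And>f. (\<And>q. q \<in> S \<Longrightarrow> eval2 f q = 0) \<Longrightarrow> eval2 f p = 0) \<Longrightarrow> p \<in> zclosure S"
  by (auto simp: zclosure_def)

lemma zclosure_polyfun_vanish:
  "p \<in> zclosure S \<Longrightarrow> polyfun \<phi> \<Longrightarrow> (\<And>q. q \<in> S \<Longrightarrow> \<phi> q = 0) \<Longrightarrow> \<phi> p = 0"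
  unfolding zclosure_def polyfun_def by blast

lemma zclosed_Int:
  assumes "zclosed V" "zclosed W"
  shows "zclosed (V \<inter> W)"
proof -
  obtain F G where "V = {p. \<forall>f\<in>F. eval2 f p = 0}" and "W = {p. \<forall>g\<in>G. eval2 g p = 0}"
    using assms unfolding zclosed_def by blast
  then have "V \<inter> W = {p. \<forall>h\<in>F \<union> G. eval2 h p = 0}"
    by auto
  then show ?thesis
    unfolding zclosed_def by blast
qed

lemma zclosed_Un:
  fixes V W :: "('a::idom \<times> 'a) set"
  assumes "zclosed V" "zclosed W"
  shows "zclosed (V \<union> W)"
proof -
  obtain F G where V: "V = {p. \<forall>f\<in>F. eval2 f p = 0}" and W: "W = {p. \<forall>g\<in>G. eval2 g p = 0}"
    using assms unfolding zclosed_def by blast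
  have "V \<union> W = {p. \<forall>h\<in>{f * g |f g. f \<in> F \<and> g \<in> G}. eval2 h p = 0}"
  proof (intro equalityI subsetI)
    fix p
    assume p: "p \<in> {p. \<forall>h\<in>{f * g |f g. f \<in> F \<and> g \<in> G}. eval2 h p = 0}"
    show "p \<in> V \<union> W"
    proof (rule ccontr)
      assume "p \<notin> V \<union> W"
      then obtain f g where "f \<in> F" "g \<in> G" "eval2 (f * g) p \<noteq> 0"
        unfolding V W by auto
      then show False using p by blast
    qed
  qed (auto simp: V W)
  then show ?thesis
    unfolding zclosed_def by blast
qed

lemma zclosed_UN:
  fixes X :: "'b \<Rightarrow> ('a::idom \<times> 'a) set"
  shows "finite I \<Longrightarrow> (\<And>i. i \<in> I \<Longrightarrow> zclosed (X i)) \<Longrightarrow> zclosed (\<Union>i\<in>I. X i)"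
  by (induction rule: finite_induct) (auto intro: zclosed_Un)

lemma zclosure_Un: "zclosure (S \<union> T) = zclosure S \<union> zclosure (T :: ('a::idom \<times> 'a) set)"
proof
  show "zclosure (S \<union> T) \<subseteq> zclosure S \<union> zclosure T"
    by (intro zclosure_minimal zclosed_Un zclosed_zclosure) (use zclosure_subset in blast)
qed (simp add: zclosure_mono)

lemma zirreducible_subset_Un:
  fixes V :: "('a::idom \<times> 'a) set"
  assumes "zirreducible V" "zclosed W1" "zclosed W2" "V \<subseteq> W1 \<union> W2"
  shows "V \<subseteq> W1 \<or> V \<subseteq> W2"
proof -
  have "zclosed V"
    using assms(1) by (simp add: zirreducible_def)
  then have "zclosed (V \<inter> W1)" "zclosed (V \<inter> W2)"
    using assms(2,3) by (auto intro: zclosed_Int)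
  moreover have "V = (V \<inter> W1) \<union> (V \<inter> W2)"
    using assms(4) by blast
  ultimately have "V = V \<inter> W1 \<or> V = V \<inter> W2"
    using assms(1) unfolding zirreducible_def by blast
  then show ?thesis by blast
qed

lemma zirreducible_subset_UN:
  fixes V :: "('a::idom \<times> 'a) set"
  assumes "finite I" "zirreducible V" "\<And>i. i \<in> I \<Longrightarrow> zclosed (X i)" "V \<subseteq> (\<Union>i\<in>I. X i)"
  shows "\<exists>i\<in>I. V \<subseteq> X i"
  using assms(1,3,4)
proof (induction rule: finite_induct)
  case empty
  then show ?case using assms(2) by (auto simp: zirreducible_def)
next
  case (insert j I)
  then have "V \<subseteq> X j \<or> V \<subseteq> (\<Union>i\<in>I. X i)"
    by (intro zirreducible_subset_Un[OF assms(2)] zclosed_UN) auto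
  then show ?case using insert by auto
qed

section \<open>Plane curves of irreducible polynomials\<close>

definition eval_fst :: "'a::comm_semiring_1 \<Rightarrow> 'a poly poly \<Rightarrow> 'a poly" where
  "eval_fst c f = map_poly (\<lambda>q. poly q c) f"

lemma eval2_eq_eval_fst: "eval2 f (c, y) = poly (eval_fst c f) y"
  by (simp add: eval2_def eval_fst_def)

lemma coeff_eval_fst: "coeff (eval_fst c f) n = poly (coeff f n) c"
  by (simp add: eval_fst_def coeff_map_poly)

lemma eval_fst_mult: "eval_fst c (f * g) = eval_fst c f * eval_fst (c::'a::comm_semiring_1) g"
  by (rule poly_eqI) (simp add: coeff_eval_fst coeff_mult poly_sum)

lemma degree_eval_fst:
  fixes f :: "'a::field poly poly"
  shows "poly (lead_coeff f) c \<noteq> 0 \<Longrightarrow> degree (eval_fst c f) = degree f"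
  unfolding eval_fst_def by (rule map_poly_degree_eq) simp

definition linear_fst :: "'a \<Rightarrow> 'a::comm_ring_1 poly poly" where
  "linear_fst a = [:[:-a, 1:]:]"

lemma linear_fst_dvd_iff: "linear_fst c dvd f \<longleftrightarrow> eval_fst c f = (0 :: 'a::field poly)"
proof
  assume "eval_fst c f = 0"
  then have "[:-c, 1:] dvd coeff f n" for n
    using coeff_eval_fst[of c f n] by (simp add: poly_eq_0_iff_dvd)
  then show "linear_fst c dvd f"
    by (simp add: const_poly_dvd_iff linear_fst_def)
next
  assume "linear_fst c dvd f"
  then obtain h where "f = linear_fst c * h" ..
  moreover have "eval_fst c (linear_fst c) = 0"
    by (simp add: eval_fst_def linear_fst_def map_poly_pCons)
  ultimately show "eval_fst c f = 0"
    by (simp add: eval_fst_mult)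
qed

lemma prime_elem_linear_fst: "prime_elem (linear_fst (a::'a::field))"
  by (simp add: linear_fst_def prime_elem_const_poly_iff prime_elem_linear_field_poly)

lemma degree_lead_coeff_linear_fst_mult:
  fixes f :: "'a::field poly poly"
  assumes "f \<noteq> 0"
  shows "degree (lead_coeff (linear_fst a * f)) = Suc (degree (lead_coeff f))"
proof -
  have "lead_coeff (linear_fst a * f) = [:-a, 1:] * lead_coeff f"
    by (simp add: linear_fst_def lead_coeff_mult del: mult_pCons_left)
  then show ?thesis
    using assms by (simp add: degree_mult_eq del: mult_pCons_left)
qed

lemma prime_elem_dvd_mult_cancel:
  fixes p r f :: "'a::idom"
  assumes "prime_elem p" "\<not> p dvd r" "r dvd p * f"
  shows "r dvd f"
proof -
  obtain s where s: "p * f = r * s"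
    using assms(3) by (elim dvdE)
  have "p dvd r * s"
    unfolding s[symmetric] by simp
  then have "p dvd s"
    using assms(1,2) prime_elem_dvd_mult_iff by blast
  then obtain s' where "s = p * s'" ..
  then have "p * f = p * (r * s')"
    using s by (simp add: ac_simps)
  then show ?thesis
    using prime_elem_not_zeroI[OF assms(1)] by auto
qed

lemma prod_linear_fst_dvd_cancel:
  fixes r f :: "'a::field poly poly"
  assumes "\<forall>a\<in>#M. \<not> linear_fst a dvd r" "r dvd (\<Prod>a\<in>#M. linear_fst a) * f"
  shows "r dvd f"
  using assms
proof (induction M)
  case (add x M)
  then have "r dvd linear_fst x * ((\<Prod>a\<in>#M. linear_fst a) * f)"
    by (simp add: mult.assoc)
  moreover have "\<not> linear_fst x dvd r"
    using add.prems(1) by simp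
  ultimately have "r dvd (\<Prod>a\<in>#M. linear_fst a) * f"
    using prime_elem_dvd_mult_cancel[OF prime_elem_linear_fst] by blast
  then show ?case
    by (rule add.IH[rotated]) (use add.prems(1) in simp)
qed simp

lemma ex_smult_linear_fst_free:
  fixes r :: "'a::field poly poly"
  assumes "r \<noteq> 0"
  shows "\<exists>D r0. D \<noteq> 0 \<and> r = smult D r0 \<and> (\<forall>a. \<not> linear_fst a dvd r0)"
  using assms
proof (induction "degree (lead_coeff r)" arbitrary: r rule: less_induct)
  case (less r)
  show ?case
  proof (cases "\<exists>a. linear_fst a dvd r")
    case False
    then show ?thesis
      by (intro exI[of _ 1] exI[of _ r]) auto
  next
    case True
    then obtain a r1 where r1: "r = linear_fst a * r1"
      by blast
    with less.prems have "r1 \<noteq> 0"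
      by auto
    moreover have "degree (lead_coeff r1) < degree (lead_coeff r)"
      using degree_lead_coeff_linear_fst_mult[OF \<open>r1 \<noteq> 0\<close>] r1 by simp
    ultimately obtain D r0 where "D \<noteq> 0" "r1 = smult D r0" "\<forall>a. \<not> linear_fst a dvd r0"
      using less.hyps by blast
    moreover have "r = smult ([:-a, 1:] * D) r0"
      using r1 calculation(2) by (simp add: linear_fst_def)
    moreover have "[:-a, 1:] * D \<noteq> 0"
      using \<open>D \<noteq> 0\<close> by (simp del: mult_pCons_left)
    ultimately show ?thesis
      by blast
  qed
qed

lemma linear_fst_free_dvd_smult:
  fixes r f :: "'a::alg_closed_field poly poly"
  assumes free: "\<forall>a. \<not> linear_fst a dvd r" and "c \<noteq> 0" and dvd: "r dvd smult c f"
  shows "r dvd f"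
proof -
  obtain M where c: "c = smult (lead_coeff c) (\<Prod>x\<in>#M. [:-x, 1:])"
    using alg_closed_imp_factorization[OF \<open>c \<noteq> 0\<close>] by blast
  have const_mult: "[:a * b:] = [:a:] * [:b:]" for a b :: "'a poly"
    by simp
  have prod: "[:\<Prod>x\<in>#M. [:-x, 1:]:] = (\<Prod>x\<in>#M. linear_fst x)"
    by (induction M) (simp_all add: linear_fst_def const_mult del: mult_pCons_left mult_pCons_right)
  have "[:c:] = [:[:lead_coeff c:] * (\<Prod>x\<in>#M. [:-x, 1:]):]"
    by (subst c) simp
  also have "\<dots> = [:[:lead_coeff c:]:] * (\<Prod>x\<in>#M. linear_fst x)"
    by (simp only: const_mult prod)
  finally have c': "[:c:] = [:[:lead_coeff c:]:] * (\<Prod>x\<in>#M. linear_fst x)" .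
  have "smult c f = [:c:] * f"
    by simp
  then have cf: "smult c f = [:[:lead_coeff c:]:] * ((\<Prod>x\<in>#M. linear_fst x) * f)"
    unfolding c' mult.assoc .
  have "is_unit [:[:lead_coeff c:]:]"
    using \<open>c \<noteq> 0\<close> by (simp add: is_unit_const_poly_iff is_unit_poly_iff dvd_field_iff)
  then have "r dvd (\<Prod>x\<in>#M. linear_fst x) * f"
    using dvd unfolding cf by (simp only: dvd_mult_unit_iff')
  then show ?thesis
    using free prod_linear_fst_dvd_cancel by blast
qed

lemma linear_fst_free_dvd_if_pseudo_mod_eq_0:
  fixes f r0 :: "'a::alg_closed_field poly poly"
  assumes "r = smult D r0" "r \<noteq> 0" "\<forall>a. \<not> linear_fst a dvd r0" "pseudo_mod f r = 0"
  shows "r0 dvd f"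
proof -
  obtain c q where "c \<noteq> 0" "smult c f = r * q"
    using pseudo_mod(1)[OF assms(2), of f] assms(4) by auto
  then have "smult c f = r0 * smult D q"
    using assms(1) by simp
  then have "r0 dvd smult c f"
    by (rule dvdI)
  then show ?thesis
    using linear_fst_free_dvd_smult[OF assms(3) \<open>c \<noteq> 0\<close>] by blast
qed

text \<open>Take \<open>r \<noteq> 0\<close> of least degree in the second variable in the ideal generated by \<open>p\<close> and
  \<open>g\<close>. Pseudo-remainders modulo \<open>r\<close> stay in the ideal, hence vanish, so once the factors
  \<open>x - a\<close> are stripped from \<open>r\<close> it divides \<open>p\<close> and \<open>g\<close>; irreducibility of \<open>p\<close> then forces
  \<open>r\<close> to be constant in the second variable.\<close>

lemma irreducible_ideal_contains_const:
  fixes p g :: "'a::alg_closed_field poly poly"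
  assumes irr: "irreducible p" and nd: "\<not> p dvd g"
  shows "\<exists>U V h. h \<noteq> 0 \<and> U * p + V * g = [:h:]"
proof -
  define I where "I = {U * p + V * g | U V. True}"
  have "p = 1 * p + 0 * g" "g = 0 * p + 1 * g"
    by simp_all
  then have pI: "p \<in> I" and gI: "g \<in> I"
    unfolding I_def by blast+
  have I_comb: "smult c f - r * q \<in> I" if fI: "f \<in> I" and rI: "r \<in> I" for f r q c
  proof -
    obtain U1 V1 where "f = U1 * p + V1 * g"
      using fI unfolding I_def by blast
    moreover obtain U2 V2 where "r = U2 * p + V2 * g"
      using rI unfolding I_def by blast
    ultimately have "smult c f - r * q = (smult c U1 - U2 * q) * p + (smult c V1 - V2 * q) * g"
      by (simp add: algebra_simps smult_add_right)
    then show ?thesis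
      unfolding I_def by blast
  qed
  obtain r where r: "r \<in> I" "r \<noteq> 0" and r_min: "\<And>s. s \<in> I \<Longrightarrow> s \<noteq> 0 \<Longrightarrow> degree r \<le> degree s"
    using ex_has_least_nat[of "\<lambda>s. s \<in> I \<and> s \<noteq> 0" g degree] gI nd by force
  obtain D r0 where D: "r = smult D r0" "D \<noteq> 0" and free: "\<forall>a. \<not> linear_fst a dvd r0"
    using ex_smult_linear_fst_free[OF \<open>r \<noteq> 0\<close>] by blast
  have r0_dvd: "r0 dvd f" if "f \<in> I" for f
  proof (rule linear_fst_free_dvd_if_pseudo_mod_eq_0[OF D(1) \<open>r \<noteq> 0\<close> free])
    obtain c q where "smult c f = r * q + pseudo_mod f r"
      using pseudo_mod(1)[OF \<open>r \<noteq> 0\<close>] by blast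
    then have "pseudo_mod f r \<in> I"
      using I_comb[OF that r(1), of c q] by (simp add: algebra_simps)
    then show "pseudo_mod f r = 0"
      using pseudo_mod(2)[OF \<open>r \<noteq> 0\<close>, of f] r_min by force
  qed
  have "degree r = 0"
  proof (rule ccontr)
    assume "degree r \<noteq> 0"
    then have "\<not> is_unit r0"
      using D by (auto simp: is_unit_poly_iff)
    moreover obtain u where u: "p = r0 * u"
      using r0_dvd[OF pI] by blast
    ultimately have "is_unit u"
      using irreducibleD[OF irr u] by blast
    then have "p dvd r0"
      using u by (simp add: mult_unit_dvd_iff')
    with r0_dvd[OF gI] nd show False
      using dvd_trans by blast
  qed
  then obtain h where h: "r = [:h:]"
    by (auto elim: degree_eq_zeroE)
  obtain U V where "U * p + V * g = r"
    using r(1) unfolding I_def by blast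
  moreover have "h \<noteq> 0"
    using r(2) h by simp
  ultimately show ?thesis
    unfolding h by blast
qed

lemma finite_zero_set_fst_in:
  fixes f :: "'a::field poly poly"
  assumes "finite X" "\<And>c. c \<in> X \<Longrightarrow> eval_fst c f \<noteq> 0"
  shows "finite {q \<in> zero_set f. fst q \<in> X}"
proof -
  have "{q \<in> zero_set f. fst q \<in> X} \<subseteq> (\<Union>c\<in>X. Pair c ` {y. poly (eval_fst c f) y = 0})"
    by (auto simp: eval2_eq_eval_fst[symmetric] image_iff intro: prod_eqI)
  moreover have "finite (\<Union>c\<in>X. Pair c ` {y. poly (eval_fst c f) y = 0})"
    using assms by (auto intro: poly_roots_finite)
  ultimately show ?thesis
    by (rule finite_subset)
qed

lemma irreducible_eval_fst_nonzero:
  fixes p :: "'a::field poly poly"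
  assumes "irreducible p" "degree p > 0"
  shows "eval_fst c p \<noteq> 0"
proof
  assume "eval_fst c p = 0"
  then obtain u where u: "p = linear_fst c * u"
    by (auto simp: linear_fst_dvd_iff[symmetric])
  have "\<not> is_unit (linear_fst c)"
    using prime_elem_linear_fst prime_elem_not_unit by blast
  then have "is_unit u"
    using irreducibleD[OF assms(1) u] by blast
  then have "degree p = 0"
    using u by (auto simp: linear_fst_def is_unit_poly_iff)
  with assms(2) show False
    by simp
qed

lemma finite_zero_set_Int_not_dvd:
  fixes p g :: "'a::alg_closed_field poly poly"
  assumes irr: "irreducible p" and nd: "\<not> p dvd g"
  shows "finite (zero_set p \<inter> zero_set g)"
proof (cases "degree p = 0")
  case True
  then obtain p0 where p0: "p = [:p0:]"
    by (auto elim: degree_eq_zeroE)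
  then have irr0: "irreducible p0"
    using irr irreducible_const_poly_iff by blast
  have "eval_fst c g \<noteq> 0" if "poly p0 c = 0" for c
  proof
    assume "eval_fst c g = 0"
    then have "linear_fst c dvd g"
      by (simp add: linear_fst_dvd_iff)
    obtain u where u: "p0 = [:-c, 1:] * u"
      using \<open>poly p0 c = 0\<close> by (auto simp: poly_eq_0_iff_dvd)
    have "\<not> is_unit [:-c, 1:]"
      by (simp add: is_unit_poly_iff)
    then have "is_unit u"
      using irreducibleD[OF irr0 u] by blast
    then have "p0 dvd [:-c, 1:]"
      unfolding u using mult_dvd_mono[of "[:-c, 1:]" "[:-c, 1:]" u 1] by simp
    then have "p dvd linear_fst c"
      by (simp add: p0 linear_fst_def)
    with \<open>linear_fst c dvd g\<close> nd show False
      using dvd_trans by blast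
  qed
  moreover have "finite {c. poly p0 c = 0}"
    using irr0 by (intro poly_roots_finite) auto
  ultimately have "finite {q \<in> zero_set g. fst q \<in> {c. poly p0 c = 0}}"
    by (intro finite_zero_set_fst_in) auto
  then show ?thesis
    by (rule rev_finite_subset) (auto simp: p0)
next
  case False
  obtain U V h where "h \<noteq> 0" and bez: "U * p + V * g = [:h:]"
    using irreducible_ideal_contains_const[OF irr nd] by blast
  have "finite {q \<in> zero_set p. fst q \<in> {c. poly h c = 0}}"
    using \<open>h \<noteq> 0\<close> irreducible_eval_fst_nonzero[OF irr] False
    by (intro finite_zero_set_fst_in poly_roots_finite) auto
  moreover have "poly h (fst q) = 0" if "q \<in> zero_set p \<inter> zero_set g" for q
    using that arg_cong[OF bez, of "\<lambda>f. eval2 f q"] by simp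
  then have "zero_set p \<inter> zero_set g \<subseteq> {q \<in> zero_set p. fst q \<in> {c. poly h c = 0}}"
    by auto
  ultimately show ?thesis
    by (rule rev_finite_subset)
qed

lemma infinite_zero_set:
  fixes p :: "'a::{alg_closed_field, field_char_0} poly poly"
  assumes irr: "irreducible p"
  shows "infinite (zero_set p)"
proof (cases "degree p = 0")
  case True
  then obtain p0 where p0: "p = [:p0:]"
    by (auto elim: degree_eq_zeroE)
  then have "irreducible p0"
    using irr irreducible_const_poly_iff by blast
  then have "p0 \<noteq> 0" "\<not> is_unit p0"
    by (auto simp: irreducible_def)
  then have "degree p0 \<noteq> 0"
    by (simp add: is_unit_iff_degree)
  then obtain c where "poly p0 c = 0"
    using alg_closed_imp_poly_has_root by blast
  then have "range (Pair c) \<subseteq> zero_set p"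
    using p0 by auto
  moreover have "infinite (range (Pair c :: 'a \<Rightarrow> 'a \<times> 'a))"
    using infinite_UNIV_char_0 finite_imageD[of "Pair c" UNIV] by (auto simp: inj_on_def)
  ultimately show ?thesis
    using infinite_super by blast
next
  case False
  have lc: "lead_coeff p \<noteq> 0"
    using irr by auto
  have "infinite (- {x. poly (lead_coeff p) x = 0})"
    using Diff_infinite_finite[OF poly_roots_finite[OF lc] infinite_UNIV_char_0]
    by (simp add: Compl_eq_Diff_UNIV)
  moreover have "- {x. poly (lead_coeff p) x = 0} \<subseteq> fst ` zero_set p"
  proof
    fix x
    assume "x \<in> - {x. poly (lead_coeff p) x = 0}"
    then have "degree (eval_fst x p) \<noteq> 0"
      using False degree_eval_fst[of p x] by auto
    then obtain y where "poly (eval_fst x p) y = 0"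
      using alg_closed_imp_poly_has_root by blast
    then have "(x, y) \<in> zero_set p"
      by (simp add: eval2_eq_eval_fst)
    then show "x \<in> fst ` zero_set p"
      by force
  qed
  ultimately show ?thesis
    using finite_surj infinite_super by blast
qed

lemma irreducible_dvd_if_vanishes:
  fixes p g :: "'a::{alg_closed_field, field_char_0} poly poly"
  assumes "irreducible p" "S \<subseteq> zero_set p" "infinite S" "\<And>q. q \<in> S \<Longrightarrow> eval2 g q = 0"
  shows "p dvd g"
proof (rule ccontr)
  assume "\<not> p dvd g"
  then have "finite (zero_set p \<inter> zero_set g)"
    using finite_zero_set_Int_not_dvd assms(1) by blast
  moreover have "S \<subseteq> zero_set p \<inter> zero_set g"
    using assms(2,4) by auto
  ultimately show False
    using assms(3) finite_subset by blast
qed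

lemma zclosed_infinite_subset_zero_set:
  fixes p :: "'a::{alg_closed_field, field_char_0} poly poly"
  assumes irr: "irreducible p" and "zclosed V" "V \<subseteq> zero_set p" "infinite V"
  shows "V = zero_set p"
proof
  obtain F where F: "V = {q. \<forall>f\<in>F. eval2 f q = 0}"
    using assms(2) unfolding zclosed_def by blast
  have "eval2 f q = 0" if "f \<in> F" "q \<in> zero_set p" for f q
  proof -
    have "p dvd f"
      using irreducible_dvd_if_vanishes[OF irr assms(3,4)] F that(1) by blast
    with that(2) show ?thesis
      by (auto elim: dvdE)
  qed
  then show "zero_set p \<subseteq> V"
    unfolding F by blast
qed (fact assms(3))

lemma zclosure_infinite_subset_zero_set:
  fixes p :: "'a::{alg_closed_field, field_char_0} poly poly"
  assumes "irreducible p" "S \<subseteq> zero_set p" "infinite S"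
  shows "zclosure S = zero_set p"
proof (rule zclosed_infinite_subset_zero_set[OF assms(1)])
  show "zclosure S \<subseteq> zero_set p"
    using assms(2) by (intro zclosure_minimal) auto
  show "infinite (zclosure S)"
    using assms(3) zclosure_subset infinite_super by blast
qed auto

lemma zirreducible_zero_set:
  fixes p :: "'a::{alg_closed_field, field_char_0} poly poly"
  assumes irr: "irreducible p"
  shows "zirreducible (zero_set p)"
  unfolding zirreducible_def
proof (intro conjI allI impI)
  show "zero_set p \<noteq> {}"
    using infinite_zero_set[OF irr] by auto
  fix V W
  assume "zclosed V \<and> zclosed W \<and> zero_set p = V \<union> W"
  moreover have "infinite V \<or> infinite W"
    using calculation infinite_zero_set[OF irr] by auto
  ultimately show "zero_set p = V \<or> zero_set p = W"
    using zclosed_infinite_subset_zero_set[OF irr] by blast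
qed auto

definition bidegree_size :: "'a::zero poly poly \<Rightarrow> nat" where
  "bidegree_size f = degree f + degree (lead_coeff f)"

lemma bidegree_size_mult:
  fixes f g :: "'a::field poly poly"
  assumes "f \<noteq> 0" "g \<noteq> 0"
  shows "bidegree_size (f * g) = bidegree_size f + bidegree_size g"
proof -
  have "lead_coeff (f * g) = lead_coeff f * lead_coeff g"
    by (rule lead_coeff_mult)
  moreover have "lead_coeff f \<noteq> 0" "lead_coeff g \<noteq> 0"
    using assms by auto
  ultimately show ?thesis
    using assms by (simp add: bidegree_size_def degree_mult_eq)
qed

lemma is_unit_if_bidegree_size_0:
  fixes f :: "'a::field poly poly"
  assumes "f \<noteq> 0" "bidegree_size f = 0"
  shows "is_unit f"
  using assms by (auto simp: bidegree_size_def is_unit_poly_iff dvd_field_iff elim!: degree_eq_zeroE)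

lemma zero_set_eq_UN_irreducible:
  fixes H :: "'a::{alg_closed_field, field_char_0} poly poly"
  assumes "H \<noteq> 0"
  shows "\<exists>F. finite F \<and> (\<forall>p\<in>F. irreducible p) \<and> zero_set H = (\<Union>p\<in>F. zero_set p)"
  using assms
proof (induction "bidegree_size H" arbitrary: H rule: less_induct)
  case (less H)
  consider "is_unit H" | "irreducible H" | a b where "H = a * b" "\<not> is_unit a" "\<not> is_unit b"
    using less.prems by (auto simp: irreducible_def)
  then show ?case
  proof cases
    case 1
    then have "zero_set H = {}"
      by (auto simp: is_unit_poly_iff)
    then show ?thesis
      by (intro exI[of _ "{}"]) auto
  next
    case 2
    then show ?thesis
      by (intro exI[of _ "{H}"]) auto
  next
    case 3
    then have nz: "a \<noteq> 0" "b \<noteq> 0"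
      using less.prems by auto
    moreover have "bidegree_size a \<noteq> 0" "bidegree_size b \<noteq> 0"
      using 3 nz is_unit_if_bidegree_size_0 by blast+
    ultimately have lt: "bidegree_size a < bidegree_size H" "bidegree_size b < bidegree_size H"
      using bidegree_size_mult[OF nz] 3(1) by simp_all
    obtain Fa where "finite Fa" "\<forall>p\<in>Fa. irreducible p" "zero_set a = (\<Union>p\<in>Fa. zero_set p)"
      using less.hyps[OF lt(1) nz(1)] by blast
    moreover obtain Fb where "finite Fb" "\<forall>p\<in>Fb. irreducible p" "zero_set b = (\<Union>p\<in>Fb. zero_set p)"
      using less.hyps[OF lt(2) nz(2)] by blast
    moreover have "zero_set H = zero_set a \<union> zero_set b"
      using 3 by auto
    ultimately show ?thesis
      by (intro exI[of _ "Fa \<union> Fb"]) auto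
  qed
qed

lemma irreducible_zero_set_subset_imp_eq:
  fixes p q :: "'a::{alg_closed_field, field_char_0} poly poly"
  assumes "irreducible p" "irreducible q" "zero_set q \<subseteq> zero_set p"
  shows "zero_set p = zero_set q"
proof -
  have "q dvd p"
    by (rule irreducible_dvd_if_vanishes[OF assms(2) order.refl infinite_zero_set[OF assms(2)]])
      (use assms(3) in auto)
  then obtain u where u: "p = q * u" ..
  then have "is_unit u"
    using irreducibleD[OF assms(1)] irreducible_not_unit[OF assms(2)] by blast
  then obtain k where "1 = u * k" ..
  then have "q = p * k"
    using u by (metis mult.assoc mult_1_right)
  then have "zero_set p \<subseteq> zero_set q"
    by auto
  with assms(3) show ?thesis
    by blast
qed

lemma irred_component_zero_set:
  fixes q H :: "'a::{alg_closed_field, field_char_0} poly poly"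
  assumes irr: "irreducible q" and "zero_set q \<subseteq> W" and "W \<subseteq> zero_set H" "H \<noteq> 0"
  shows "irred_component (zero_set q) W"
  unfolding irred_component_def
proof (intro conjI allI impI)
  fix V
  assume V: "zirreducible V \<and> zero_set q \<subseteq> V \<and> V \<subseteq> W"
  obtain F where F: "finite F" "\<forall>p\<in>F. irreducible p" "zero_set H = (\<Union>p\<in>F. zero_set p)"
    using zero_set_eq_UN_irreducible[OF \<open>H \<noteq> 0\<close>] by blast
  then obtain p where "p \<in> F" "V \<subseteq> zero_set p"
    using zirreducible_subset_UN[of F V zero_set] V assms(3) by blast
  moreover have "infinite V"
    using V infinite_zero_set[OF irr] finite_subset by blast
  ultimately have "V = zero_set p" "irreducible p"
    using zclosed_infinite_subset_zero_set V F(2) by (auto simp: zirreducible_def)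
  then show "V = zero_set q"
    using irreducible_zero_set_subset_imp_eq[OF _ irr] V by blast
qed (use assms zirreducible_zero_set in auto)

section \<open>Geometry of the conchoid relation\<close>

definition sqdist :: "'a::comm_ring_1 \<times> 'a \<Rightarrow> 'a \<times> 'a \<Rightarrow> 'a" where
  "sqdist A p = (fst p - fst A)^2 + (snd p - snd A)^2"

text \<open>The second condition says that \<open>x\<close> lies on the line through \<open>A\<close> and \<open>y\<close>.\<close>

definition conchoid_rel :: "'a::comm_ring_1 \<times> 'a \<Rightarrow> 'a \<Rightarrow> 'a \<times> 'a \<Rightarrow> 'a \<times> 'a \<Rightarrow> bool" where
  "conchoid_rel A \<delta> x y \<longleftrightarrow> sqdist y x = \<delta>^2 \<and>
     (snd y - snd A) * (fst x - fst y) - (fst y - fst A) * (snd x - snd y) = 0"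

definition conchoid_points :: "('a::comm_ring_1 \<times> 'a) set \<Rightarrow> 'a \<times> 'a \<Rightarrow> 'a \<Rightarrow> ('a \<times> 'a) set" where
  "conchoid_points D A \<delta> = {x. \<exists>y\<in>D. sqdist A y \<noteq> 0 \<and> conchoid_rel A \<delta> x y}"

definition ray_point :: "'a::comm_ring_1 \<times> 'a \<Rightarrow> 'a \<times> 'a \<Rightarrow> 'a \<Rightarrow> 'a \<times> 'a" where
  "ray_point A y t = (fst y + t * (fst y - fst A), snd y + t * (snd y - snd A))"

lemma nonisotropic_part_eq: "nonisotropic_part D A = {y \<in> D. sqdist A y \<noteq> 0}"
  by (auto simp: nonisotropic_part_def sqdist_def)

lemma nonisotropic_part_nonempty:
  assumes "E \<subseteq> D" "\<And>x. x \<in> E \<Longrightarrow> sqdist A x \<noteq> 0" "E \<noteq> {}"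
  shows "nonisotropic_part D A \<noteq> {}"
  using assms unfolding nonisotropic_part_eq by blast

lemma conchoid_eq_zclosure: "conchoid D A (\<delta>::'a::field) = zclosure (conchoid_points D A \<delta>)"
proof -
  have "fst ` conchoid_incidence D A \<delta> = conchoid_points D A \<delta>"
  proof (intro equalityI subsetI)
    fix x
    assume "x \<in> fst ` conchoid_incidence D A \<delta>"
    then obtain y w where "(x, y, w) \<in> conchoid_incidence D A \<delta>"
      by force
    then show "x \<in> conchoid_points D A \<delta>"
      by (cases x, cases y) (force simp: conchoid_incidence_def conchoid_points_def sqdist_def
          conchoid_rel_def power2_commute)
  next
    fix x
    assume "x \<in> conchoid_points D A \<delta>"
    then obtain y where "y \<in> D" "sqdist A y \<noteq> 0" "conchoid_rel A \<delta> x y"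
      by (auto simp: conchoid_points_def)
    then have "(x, y, inverse (sqdist A y)) \<in> conchoid_incidence D A \<delta>"
      by (cases x, cases y) (auto simp: conchoid_incidence_def sqdist_def conchoid_rel_def power2_commute)
    then show "x \<in> fst ` conchoid_incidence D A \<delta>"
      by force
  qed
  then show ?thesis
    by (simp add: conchoid_def)
qed

lemma polyfun_sqdist [intro]: "polyfun (sqdist (A::'a::comm_ring_1 \<times> 'a))"
  unfolding sqdist_def[abs_def] by (intro polyfun_add polyfun_power polyfun_diff polyfun_fst polyfun_snd polyfun_const)

lemma sqdist_nonzero_imp_neq: "sqdist A y \<noteq> 0 \<Longrightarrow> y \<noteq> A"
  by (auto simp: sqdist_def)

lemma sqdist_ray_point: "sqdist A (ray_point A y t) = (1 + t)^2 * sqdist A y"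
  by (simp add: sqdist_def ray_point_def power2_eq_square algebra_simps)

lemma conchoid_rel_sym: "conchoid_rel A \<delta> x y \<longleftrightarrow> conchoid_rel A \<delta> y x"
proof -
  have "(snd x - snd A) * (fst y - fst x) - (fst x - fst A) * (snd y - snd x) =
        - ((snd y - snd A) * (fst x - fst y) - (fst y - fst A) * (snd x - snd y))"
    by (simp add: algebra_simps)
  moreover have "sqdist y x = sqdist x y"
    by (simp add: sqdist_def power2_commute)
  ultimately show ?thesis
    unfolding conchoid_rel_def by auto
qed

lemma conchoid_rel_ray_point: "conchoid_rel A \<delta> (ray_point A y t) y \<longleftrightarrow> t^2 * sqdist A y = \<delta>^2"
  by (simp add: conchoid_rel_def ray_point_def sqdist_def power2_eq_square algebra_simps)

lemma conchoid_rel_iff_ray_point: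
  fixes A x y :: "'a::field \<times> 'a"
  assumes "y \<noteq> A"
  shows "conchoid_rel A \<delta> x y \<longleftrightarrow> (\<exists>t. x = ray_point A y t \<and> t^2 * sqdist A y = \<delta>^2)"
proof
  assume rel: "conchoid_rel A \<delta> x y"
  define v1 v2 u1 u2 where "v1 = fst y - fst A" "v2 = snd y - snd A" "u1 = fst x - fst y" "u2 = snd x - snd y"
  have cross: "v2 * u1 = v1 * u2"
    using rel unfolding conchoid_rel_def v1_v2_u1_u2_def by simp
  have "\<exists>t. u1 = t * v1 \<and> u2 = t * v2"
  proof (cases "v1 = 0")
    case True
    then have "v2 \<noteq> 0"
      using assms unfolding v1_v2_u1_u2_def by (auto simp: prod_eq_iff)
    then show ?thesis
      using cross True by (intro exI[of _ "u2 / v2"]) simp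
  next
    case False
    then show ?thesis
      using cross by (intro exI[of _ "u1 / v1"]) (simp add: field_simps)
  qed
  then obtain t where "x = ray_point A y t"
    unfolding ray_point_def v1_v2_u1_u2_def by (auto simp: prod_eq_iff algebra_simps)
  then show "\<exists>t. x = ray_point A y t \<and> t^2 * sqdist A y = \<delta>^2"
    using rel conchoid_rel_ray_point by blast
qed (use conchoid_rel_ray_point in blast)

lemma conchoid_rel_imp_sqrt:
  fixes A x y :: "'a::field \<times> 'a"
  assumes "sqdist A y \<noteq> 0" "\<delta> \<noteq> 0" "conchoid_rel A \<delta> x y"
  shows "\<exists>r. r^2 = sqdist A y \<and> x = ray_point A y (\<delta> / r)"
proof -
  obtain t where t: "x = ray_point A y t" "t^2 * sqdist A y = \<delta>^2"
    using conchoid_rel_iff_ray_point assms sqdist_nonzero_imp_neq by blast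
  then have "t \<noteq> 0"
    using assms(2) by auto
  then have "(\<delta> / t)^2 = sqdist A y" "\<delta> / (\<delta> / t) = t"
    using t(2) assms(2) by (simp_all add: field_simps power2_eq_square)
  then show ?thesis
    using t(1) by metis
qed

lemma conchoid_rel_sqrt:
  fixes A y :: "'a::field \<times> 'a"
  assumes "r^2 = sqdist A y" "sqdist A y \<noteq> 0"
  shows "conchoid_rel A \<delta> (ray_point A y (\<delta> / r)) y"
proof -
  have "r \<noteq> 0"
    using assms by auto
  then show ?thesis
    unfolding conchoid_rel_ray_point using assms(1)[symmetric]
    by (simp add: field_simps power2_eq_square)
qed

lemma isotropic_conchoid_point:
  fixes A :: "'a::field \<times> 'a"
  assumes "x \<in> conchoid_points D A \<delta>" "sqdist A x = 0"
  shows "x = A"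
proof -
  obtain y where y: "sqdist A y \<noteq> 0" "conchoid_rel A \<delta> x y"
    using assms(1) by (auto simp: conchoid_points_def)
  then obtain t where t: "x = ray_point A y t"
    using conchoid_rel_iff_ray_point sqdist_nonzero_imp_neq by blast
  then have "(1 + t)^2 = 0"
    using assms(2) y(1) sqdist_ray_point[of A y t] by simp
  then have "t = -1"
    by (simp add: add_eq_0_iff)
  then show ?thesis
    using t by (simp add: ray_point_def prod_eq_iff)
qed

text \<open>With \<open>x = ray_point A y t\<close> and \<open>z = ray_point A x s\<close> one has
  \<open>z = ray_point A y (t + s (1 + t))\<close>, and the cross term of
  \<open>(t + s (1 + t))\<^sup>2 sqdist A y\<close> is \<open>\<plusminus> 2 d d'\<close>.\<close>

lemma conchoid_rel_compose:
  fixes A x y z :: "'a::field \<times> 'a"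
  assumes "sqdist A y \<noteq> 0" "conchoid_rel A d x y" "sqdist A x \<noteq> 0" "conchoid_rel A d' z x"
  shows "conchoid_rel A (d + d') z y \<or> conchoid_rel A (d - d') z y"
proof -
  obtain t where t: "x = ray_point A y t" "t^2 * sqdist A y = d^2"
    using conchoid_rel_iff_ray_point assms(1,2) sqdist_nonzero_imp_neq by blast
  obtain s where s: "z = ray_point A x s" "s^2 * sqdist A x = d'^2"
    using conchoid_rel_iff_ray_point assms(3,4) sqdist_nonzero_imp_neq by blast
  define T where "T = t + s * (1 + t)"
  have z: "z = ray_point A y T"
    unfolding s(1) t(1) ray_point_def T_def by (simp add: algebra_simps)
  have s2: "s^2 * (1 + t)^2 * sqdist A y = d'^2"
    using s(2) t(1) sqdist_ray_point[of A y t] by (simp add: ac_simps)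
  have "(t * s * (1 + t) * sqdist A y)^2 = (t^2 * sqdist A y) * (s^2 * (1 + t)^2 * sqdist A y)"
    by (simp add: power2_eq_square algebra_simps)
  then have "(t * s * (1 + t) * sqdist A y)^2 = (d * d')^2"
    using t(2) s2 by (simp add: power_mult_distrib)
  then have cross: "t * s * (1 + t) * sqdist A y = d * d' \<or> t * s * (1 + t) * sqdist A y = - (d * d')"
    using power2_eq_iff by blast
  have "T^2 * sqdist A y = t^2 * sqdist A y + s^2 * (1 + t)^2 * sqdist A y + 2 * (t * s * (1 + t) * sqdist A y)"
    by (simp add: T_def power2_eq_square algebra_simps)
  then have "T^2 * sqdist A y = d^2 + d'^2 + 2 * (t * s * (1 + t) * sqdist A y)"
    by (simp only: t(2) s2)
  with cross have "T^2 * sqdist A y = (d + d')^2 \<or> T^2 * sqdist A y = (d - d')^2"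
    by (elim disjE) (simp_all add: power2_sum power2_diff)
  then show ?thesis
    using z conchoid_rel_ray_point by metis
qed

lemma finite_conchoid_rel_fibre:
  fixes A y :: "'a::field \<times> 'a"
  assumes "y \<noteq> A" "\<delta> \<noteq> 0"
  shows "finite {x. conchoid_rel A \<delta> x y}"
proof -
  have "[:- (\<delta>^2), 0, sqdist A y:] \<noteq> 0"
    using assms(2) by simp
  then have "finite {t. poly [:- (\<delta>^2), 0, sqdist A y:] t = 0}"
    by (rule poly_roots_finite)
  moreover have "{x. conchoid_rel A \<delta> x y} \<subseteq> ray_point A y ` {t. poly [:- (\<delta>^2), 0, sqdist A y:] t = 0}"
    using conchoid_rel_iff_ray_point[OF assms(1)] by (auto simp: power2_eq_square algebra_simps)
  ultimately show ?thesis
    using finite_surj by blast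
qed

section \<open>Polynomials along the conchoid correspondence\<close>

text \<open>The two conchoid points of \<open>y\<close> are \<open>ray_point A y (\<delta> / r)\<close> for the two square
  roots \<open>r\<close> of \<open>sqdist A y\<close>.\<close>

definition sqrt_linear :: "'a::field \<times> 'a \<Rightarrow> 'a \<Rightarrow> ('a \<times> 'a \<Rightarrow> 'a) \<Rightarrow> bool" where
  "sqrt_linear A \<delta> \<phi> \<longleftrightarrow> (\<exists>\<alpha> \<beta> k. polyfun \<alpha> \<and> polyfun \<beta> \<and> (\<forall>y r. r^2 = sqdist A y \<longrightarrow> sqdist A y \<noteq> 0 \<longrightarrow>
      sqdist A y ^ k * \<phi> (ray_point A y (\<delta> / r)) = \<alpha> y + \<beta> y * r))"

lemma sqrt_linearI:
  assumes "polyfun \<alpha>" "polyfun \<beta>"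
    and "\<And>y r. r^2 = sqdist A y \<Longrightarrow> sqdist A y \<noteq> 0 \<Longrightarrow> sqdist A y ^ k * \<phi> (ray_point A y (\<delta> / r)) = \<alpha> y + \<beta> y * r"
  shows "sqrt_linear A \<delta> \<phi>"
  using assms unfolding sqrt_linear_def by blast

lemma sqrt_linear_const: "sqrt_linear A \<delta> (\<lambda>p. c)"
  by (rule sqrt_linearI[of "\<lambda>p. c" "\<lambda>p. 0" _ 0]) auto

lemma sqrt_linear_fst: "sqrt_linear A \<delta> fst"
proof (rule sqrt_linearI[of "\<lambda>y. sqdist A y * fst y" "\<lambda>y. \<delta> * (fst y - fst A)" _ 1])
  fix y r
  assume r: "r^2 = sqdist A y" "sqdist A y \<noteq> 0"
  then have "r \<noteq> 0"
    by auto
  then show "sqdist A y ^ 1 * fst (ray_point A y (\<delta> / r)) = sqdist A y * fst y + \<delta> * (fst y - fst A) * r"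
    unfolding r(1)[symmetric] by (simp add: ray_point_def field_simps power2_eq_square)
qed (intro polyfun_mult polyfun_diff polyfun_sqdist polyfun_fst polyfun_snd polyfun_const)+

lemma sqrt_linear_snd: "sqrt_linear A \<delta> snd"
proof (rule sqrt_linearI[of "\<lambda>y. sqdist A y * snd y" "\<lambda>y. \<delta> * (snd y - snd A)" _ 1])
  fix y r
  assume r: "r^2 = sqdist A y" "sqdist A y \<noteq> 0"
  then have "r \<noteq> 0"
    by auto
  then show "sqdist A y ^ 1 * snd (ray_point A y (\<delta> / r)) = sqdist A y * snd y + \<delta> * (snd y - snd A) * r"
    unfolding r(1)[symmetric] by (simp add: ray_point_def field_simps power2_eq_square)
qed (intro polyfun_mult polyfun_diff polyfun_sqdist polyfun_fst polyfun_snd polyfun_const)+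

lemma sqrt_linear_add:
  assumes "sqrt_linear A \<delta> \<phi>" "sqrt_linear A \<delta> \<psi>"
  shows "sqrt_linear A \<delta> (\<lambda>p. \<phi> p + \<psi> p)"
proof -
  obtain \<alpha>1 \<beta>1 k1 where 1: "polyfun \<alpha>1" "polyfun \<beta>1" "\<And>y r. r^2 = sqdist A y \<Longrightarrow> sqdist A y \<noteq> 0 \<Longrightarrow>
      sqdist A y ^ k1 * \<phi> (ray_point A y (\<delta> / r)) = \<alpha>1 y + \<beta>1 y * r"
    using assms(1) unfolding sqrt_linear_def by blast
  obtain \<alpha>2 \<beta>2 k2 where 2: "polyfun \<alpha>2" "polyfun \<beta>2" "\<And>y r. r^2 = sqdist A y \<Longrightarrow> sqdist A y \<noteq> 0 \<Longrightarrow>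
      sqdist A y ^ k2 * \<psi> (ray_point A y (\<delta> / r)) = \<alpha>2 y + \<beta>2 y * r"
    using assms(2) unfolding sqrt_linear_def by blast
  show ?thesis
  proof (rule sqrt_linearI[of "\<lambda>y. sqdist A y ^ k2 * \<alpha>1 y + sqdist A y ^ k1 * \<alpha>2 y"
        "\<lambda>y. sqdist A y ^ k2 * \<beta>1 y + sqdist A y ^ k1 * \<beta>2 y" _ "k1 + k2"])
    fix y r
    assume r: "r^2 = sqdist A y" "sqdist A y \<noteq> 0"
    let ?x = "ray_point A y (\<delta> / r)"
    have "sqdist A y ^ (k1 + k2) * (\<phi> ?x + \<psi> ?x) =
        sqdist A y ^ k2 * (sqdist A y ^ k1 * \<phi> ?x) + sqdist A y ^ k1 * (sqdist A y ^ k2 * \<psi> ?x)"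
      by (simp add: power_add algebra_simps)
    then show "sqdist A y ^ (k1 + k2) * (\<phi> ?x + \<psi> ?x) =
        sqdist A y ^ k2 * \<alpha>1 y + sqdist A y ^ k1 * \<alpha>2 y + (sqdist A y ^ k2 * \<beta>1 y + sqdist A y ^ k1 * \<beta>2 y) * r"
      using 1(3)[OF r] 2(3)[OF r] by (simp add: algebra_simps)
  qed (intro polyfun_add polyfun_mult polyfun_power polyfun_sqdist 1(1,2) 2(1,2))+
qed

lemma sqrt_linear_mult:
  assumes "sqrt_linear A \<delta> \<phi>" "sqrt_linear A \<delta> \<psi>"
  shows "sqrt_linear A \<delta> (\<lambda>p. \<phi> p * \<psi> p)"
proof -
  obtain \<alpha>1 \<beta>1 k1 where 1: "polyfun \<alpha>1" "polyfun \<beta>1" "\<And>y r. r^2 = sqdist A y \<Longrightarrow> sqdist A y \<noteq> 0 \<Longrightarrow>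
      sqdist A y ^ k1 * \<phi> (ray_point A y (\<delta> / r)) = \<alpha>1 y + \<beta>1 y * r"
    using assms(1) unfolding sqrt_linear_def by blast
  obtain \<alpha>2 \<beta>2 k2 where 2: "polyfun \<alpha>2" "polyfun \<beta>2" "\<And>y r. r^2 = sqdist A y \<Longrightarrow> sqdist A y \<noteq> 0 \<Longrightarrow>
      sqdist A y ^ k2 * \<psi> (ray_point A y (\<delta> / r)) = \<alpha>2 y + \<beta>2 y * r"
    using assms(2) unfolding sqrt_linear_def by blast
  show ?thesis
  proof (rule sqrt_linearI[of "\<lambda>y. \<alpha>1 y * \<alpha>2 y + \<beta>1 y * \<beta>2 y * sqdist A y"
        "\<lambda>y. \<alpha>1 y * \<beta>2 y + \<beta>1 y * \<alpha>2 y" _ "k1 + k2"])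
    fix y r
    assume r: "r^2 = sqdist A y" "sqdist A y \<noteq> 0"
    let ?x = "ray_point A y (\<delta> / r)"
    have "sqdist A y ^ (k1 + k2) * (\<phi> ?x * \<psi> ?x) = (sqdist A y ^ k1 * \<phi> ?x) * (sqdist A y ^ k2 * \<psi> ?x)"
      by (simp add: power_add algebra_simps)
    also have "\<dots> = (\<alpha>1 y + \<beta>1 y * r) * (\<alpha>2 y + \<beta>2 y * r)"
      using 1(3)[OF r] 2(3)[OF r] by simp
    also have "\<dots> = \<alpha>1 y * \<alpha>2 y + \<beta>1 y * \<beta>2 y * r^2 + (\<alpha>1 y * \<beta>2 y + \<beta>1 y * \<alpha>2 y) * r"
      by (simp add: power2_eq_square algebra_simps)
    finally show "sqdist A y ^ (k1 + k2) * (\<phi> ?x * \<psi> ?x) =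
        \<alpha>1 y * \<alpha>2 y + \<beta>1 y * \<beta>2 y * sqdist A y + (\<alpha>1 y * \<beta>2 y + \<beta>1 y * \<alpha>2 y) * r"
      using r(1) by simp
  qed (intro polyfun_add polyfun_mult polyfun_sqdist 1(1,2) 2(1,2))+
qed

lemma sqrt_linear_eval2: "sqrt_linear A \<delta> (eval2 f)"
  by (induction rule: eval2_induct)
    (auto intro: sqrt_linear_const sqrt_linear_fst sqrt_linear_snd sqrt_linear_add sqrt_linear_mult)

text \<open>Both conchoid points of \<open>y\<close> lie on a curve exactly when \<open>\<alpha> y = \<beta> y = 0\<close>
  (characteristic zero separates \<open>\<alpha> y \<plusminus> \<beta> y r\<close>); these are polynomial conditions, so they
  pass to the Zariski closure.\<close>

lemma conchoid_points_zclosure: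
  fixes A :: "'a::{alg_closed_field, field_char_0} \<times> 'a"
  assumes E: "\<And>z. z \<in> E \<Longrightarrow> sqdist A z \<noteq> 0" and "\<delta> \<noteq> 0"
  shows "conchoid_points (zclosure E) A \<delta> \<subseteq> zclosure (conchoid_points E A \<delta>)"
proof
  fix x
  assume "x \<in> conchoid_points (zclosure E) A \<delta>"
  then obtain y where y: "y \<in> zclosure E" "sqdist A y \<noteq> 0" "conchoid_rel A \<delta> x y"
    by (auto simp: conchoid_points_def)
  show "x \<in> zclosure (conchoid_points E A \<delta>)"
  proof (rule zclosureI)
    fix f
    assume vanish: "\<And>q. q \<in> conchoid_points E A \<delta> \<Longrightarrow> eval2 f q = 0"
    obtain \<alpha> \<beta> k where ab: "polyfun \<alpha>" "polyfun \<beta>" "\<And>y r. r^2 = sqdist A y \<Longrightarrow> sqdist A y \<noteq> 0 \<Longrightarrow>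
        sqdist A y ^ k * eval2 f (ray_point A y (\<delta> / r)) = \<alpha> y + \<beta> y * r"
      using sqrt_linear_eval2[of A \<delta> f] unfolding sqrt_linear_def by blast
    have "\<alpha> z = 0 \<and> \<beta> z = 0" if "z \<in> E" for z
    proof -
      have nz: "sqdist A z \<noteq> 0"
        using E that by blast
      obtain r where r: "r^2 = sqdist A z"
        using nth_root_exists[of 2 "sqdist A z"] by auto
      then have r': "(-r)^2 = sqdist A z" and "r \<noteq> 0"
        using nz by auto
      have "ray_point A z (\<delta> / r) \<in> conchoid_points E A \<delta>" "ray_point A z (\<delta> / (-r)) \<in> conchoid_points E A \<delta>"
        using conchoid_rel_sqrt[OF r nz] conchoid_rel_sqrt[OF r' nz] that nz by (auto simp: conchoid_points_def)
      then have "\<alpha> z + \<beta> z * r = 0" "\<alpha> z - \<beta> z * r = 0"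
        using ab(3)[OF r nz] ab(3)[OF r' nz] vanish by auto
      then show ?thesis
        using \<open>r \<noteq> 0\<close> by (auto simp: algebra_simps)
    qed
    then have "\<alpha> y = 0" "\<beta> y = 0"
      using zclosure_polyfun_vanish[OF y(1)] ab(1,2) by blast+
    moreover obtain r where "r^2 = sqdist A y" "x = ray_point A y (\<delta> / r)"
      using conchoid_rel_imp_sqrt[OF y(2) \<open>\<delta> \<noteq> 0\<close> y(3)] by blast
    ultimately have "sqdist A y ^ k * eval2 f x = 0"
      using ab(3) y(2) by simp
    then show "eval2 f x = 0"
      using y(2) by simp
  qed
qed

lemma irreducible_nonzero_on_axis:
  fixes q :: "'a::field poly poly"
  assumes "irreducible q"
  shows "poly q [:b:] \<noteq> 0 \<or> eval_fst a q \<noteq> 0"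
proof (cases "poly q [:b:] = 0")
  case True
  then obtain u where u: "q = [:-[:b:], 1:] * u"
    by (auto simp: poly_eq_0_iff_dvd)
  have "\<not> is_unit [:-[:b:], 1:]"
    by (simp add: is_unit_poly_iff)
  then have "is_unit u"
    using irreducibleD[OF assms u] by blast
  then obtain c where "u = [:[:c:]:]" "c \<noteq> 0"
    by (auto simp: is_unit_poly_iff dvd_field_iff)
  then show ?thesis
    using u by (simp add: eval_fst_def map_poly_pCons)
qed simp

lemma ex_avoid_shifted_roots:
  fixes h :: "'a::field_char_0 poly"
  assumes "h \<noteq> 0"
  shows "\<exists>l. l \<noteq> 0 \<and> poly h (l + \<delta>) \<noteq> 0 \<and> poly h (l - \<delta>) \<noteq> 0"
proof -
  let ?R = "{t. poly h t = 0}"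
  have "finite (insert 0 ((\<lambda>t. t - \<delta>) ` ?R \<union> (\<lambda>t. t + \<delta>) ` ?R))"
    using poly_roots_finite[OF assms] by simp
  then obtain l where "l \<notin> insert 0 ((\<lambda>t. t - \<delta>) ` ?R \<union> (\<lambda>t. t + \<delta>) ` ?R)"
    using ex_new_if_finite[OF infinite_UNIV_char_0] by blast
  then show ?thesis
    by (intro exI[of _ l]) (auto simp: image_iff algebra_simps)
qed

lemma ray_point_on_line:
  fixes A :: "'a::field \<times> 'a"
  assumes "v1^2 + v2^2 = 1" "l \<noteq> 0" "\<rho>^2 = sqdist A (fst A + l * v1, snd A + l * v2)"
  shows "ray_point A (fst A + l * v1, snd A + l * v2) (\<delta> / \<rho>) \<in>
           {(fst A + (l + \<delta>) * v1, snd A + (l + \<delta>) * v2), (fst A + (l - \<delta>) * v1, snd A + (l - \<delta>) * v2)}"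
proof -
  have "sqdist A (fst A + l * v1, snd A + l * v2) = l^2"
    using assms(1) by (simp add: sqdist_def power_mult_distrib flip: distrib_left)
  then have "\<rho> = l \<or> \<rho> = -l"
    using assms(3) by (simp add: power2_eq_iff)
  then show ?thesis
    using assms(2) by (auto simp: ray_point_def algebra_simps)
qed

lemma ex_conchoid_points_off_curve:
  fixes q :: "'a::{alg_closed_field, field_char_0} poly poly"
  assumes "irreducible q"
  shows "\<exists>x. sqdist A x \<noteq> 0 \<and> (\<forall>\<rho>. \<rho>^2 = sqdist A x \<longrightarrow> eval2 q (ray_point A x (\<delta> / \<rho>)) \<noteq> 0)"
proof -
  obtain a b where A: "A = (a, b)"
    by (cases A)
  obtain v1 v2 h where v: "v1^2 + v2^2 = 1" and "h \<noteq> 0"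
    and h: "\<And>t. poly h t = eval2 q (a + t * v1, b + t * v2)"
  proof (cases "poly q [:b:] = 0")
    case False
    show ?thesis
      by (rule that[of 1 0 "pcompose (poly q [:b:]) [:a, 1:]"])
        (use False in \<open>auto simp: pcompose_eq_0 poly_pcompose eval2_eq_poly_poly\<close>)
  next
    case True
    then have "eval_fst a q \<noteq> 0"
      using irreducible_nonzero_on_axis[OF assms] by blast
    then show ?thesis
      by (intro that[of 0 1 "pcompose (eval_fst a q) [:b, 1:]"])
        (auto simp: pcompose_eq_0 poly_pcompose eval2_eq_eval_fst)
  qed
  obtain l where "l \<noteq> 0" "poly h (l + \<delta>) \<noteq> 0" "poly h (l - \<delta>) \<noteq> 0"
    using ex_avoid_shifted_roots[OF \<open>h \<noteq> 0\<close>] by blast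
  define x where "x = (a + l * v1, b + l * v2)"
  have "sqdist A x = l^2"
    using v by (simp add: A x_def sqdist_def power_mult_distrib flip: distrib_left)
  moreover have "eval2 q (ray_point A x (\<delta> / \<rho>)) \<noteq> 0" if \<rho>: "\<rho>^2 = sqdist A x" for \<rho>
  proof -
    have "ray_point A x (\<delta> / \<rho>) \<in> {(a + (l + \<delta>) * v1, b + (l + \<delta>) * v2), (a + (l - \<delta>) * v1, b + (l - \<delta>) * v2)}"
      using ray_point_on_line[OF v \<open>l \<noteq> 0\<close>, of \<rho> A \<delta>] \<rho> by (simp add: A x_def)
    then show ?thesis
      using h[of "l + \<delta>"] h[of "l - \<delta>"] \<open>poly h (l + \<delta>) \<noteq> 0\<close> \<open>poly h (l - \<delta>) \<noteq> 0\<close> by auto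
  qed
  ultimately show ?thesis
    using \<open>l \<noteq> 0\<close> by (intro exI[of _ x]) simp
qed

lemma conchoid_points_subset_zero_set:
  fixes q :: "'a::{alg_closed_field, field_char_0} poly poly"
  assumes irr: "irreducible q" and D: "D \<subseteq> zero_set q" and "\<delta> \<noteq> 0"
  shows "\<exists>H. H \<noteq> 0 \<and> conchoid_points D A \<delta> \<subseteq> zero_set H"
proof -
  obtain \<alpha> \<beta> k where "polyfun \<alpha>" "polyfun \<beta>" and ab: "\<And>y r. r^2 = sqdist A y \<Longrightarrow> sqdist A y \<noteq> 0 \<Longrightarrow>
      sqdist A y ^ k * eval2 q (ray_point A y (\<delta> / r)) = \<alpha> y + \<beta> y * r"
    using sqrt_linear_eval2[of A \<delta> q] unfolding sqrt_linear_def by blast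
  then have "polyfun (\<lambda>x. sqdist A x * (\<alpha> x ^ 2 - \<beta> x ^ 2 * sqdist A x))"
    by (intro polyfun_mult polyfun_diff polyfun_power polyfun_sqdist)
  then obtain H where H: "\<And>x. eval2 H x = sqdist A x * (\<alpha> x ^ 2 - \<beta> x ^ 2 * sqdist A x)"
    unfolding polyfun_def by (auto simp: fun_eq_iff)
  have norm: "\<alpha> x ^ 2 - \<beta> x ^ 2 * sqdist A x = (\<alpha> x + \<beta> x * \<rho>) * (\<alpha> x + \<beta> x * (-\<rho>))"
    if "\<rho>^2 = sqdist A x" for x \<rho>
    using that by (simp add: power2_eq_square algebra_simps)
  have "conchoid_points D A \<delta> \<subseteq> zero_set H"
  proof
    fix x
    assume "x \<in> conchoid_points D A \<delta>"
    then obtain y where y: "y \<in> D" "conchoid_rel A \<delta> y x"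
      by (auto simp: conchoid_points_def conchoid_rel_sym)
    show "x \<in> zero_set H"
    proof (cases "sqdist A x = 0")
      case False
      then obtain \<rho> where \<rho>: "\<rho>^2 = sqdist A x" "y = ray_point A x (\<delta> / \<rho>)"
        using conchoid_rel_imp_sqrt[OF _ \<open>\<delta> \<noteq> 0\<close> y(2)] by blast
      then have "\<alpha> x + \<beta> x * \<rho> = 0"
        using ab[OF \<rho>(1) False] y(1) D by auto
      then show ?thesis
        by (simp add: H norm[OF \<rho>(1)])
    qed (simp add: H)
  qed
  moreover obtain x0 where x0: "sqdist A x0 \<noteq> 0"
    and off: "\<And>\<rho>. \<rho>^2 = sqdist A x0 \<Longrightarrow> eval2 q (ray_point A x0 (\<delta> / \<rho>)) \<noteq> 0"
    using ex_conchoid_points_off_curve[OF irr] by blast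
  obtain \<rho> where \<rho>: "\<rho>^2 = sqdist A x0" and \<rho>': "(-\<rho>)^2 = sqdist A x0"
    using nth_root_exists[of 2 "sqdist A x0"] by auto
  have "\<alpha> x0 + \<beta> x0 * \<rho> \<noteq> 0" "\<alpha> x0 + \<beta> x0 * (-\<rho>) \<noteq> 0"
    using ab[OF \<rho> x0] ab[OF \<rho>' x0] off[OF \<rho>] off[OF \<rho>'] x0 by auto
  then have "eval2 H x0 \<noteq> 0"
    using x0 by (simp add: H norm[OF \<rho>])
  then have "H \<noteq> 0"
    by auto
  ultimately show ?thesis
    by blast
qed

lemma conchoid_subset_zero_set:
  fixes q :: "'a::{alg_closed_field, field_char_0} poly poly"
  assumes "irreducible q" "D \<subseteq> zero_set q" "\<delta> \<noteq> 0"
  shows "\<exists>H. H \<noteq> 0 \<and> conchoid D A \<delta> \<subseteq> zero_set H"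
  using conchoid_points_subset_zero_set[OF assms, of A]
  by (auto simp: conchoid_eq_zclosure dest: zclosure_minimal[OF _ zclosed_zero_set])

section \<open>Circles centred at the focus\<close>

definition circle_poly :: "'a::comm_ring_1 \<times> 'a \<Rightarrow> 'a \<Rightarrow> 'a poly poly" where
  "circle_poly A s = [:[:-fst A, 1:]^2 + [:(snd A)^2 - s^2:], [:-2 * snd A:], 1:]"

lemma eval2_circle_poly: "eval2 (circle_poly A s) p = sqdist A p - s^2"
  by (simp add: circle_poly_def sqdist_def eval2_eq_poly_poly power2_eq_square algebra_simps)

lemma degree_circle_poly [simp]: "degree (circle_poly A s) = 2"
  and lead_coeff_circle_poly [simp]: "lead_coeff (circle_poly A s) = 1"
  by (simp_all add: circle_poly_def)

lemma zero_set_circle_poly: "zero_set (circle_poly A s) = circle A s"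
  by (auto simp: circle_def eval2_circle_poly sqdist_def)

text \<open>A circle of nonzero radius is not the graph of a polynomial: otherwise, with \<open>i\<^sup>2 = -1\<close>,
  the two factors of \<open>(x - a)\<^sup>2 + (u x - b)\<^sup>2\<close> would be polynomials with constant nonzero
  product but non-constant sum \<open>2 (x - a)\<close>.\<close>

lemma no_poly_graph_on_circle:
  fixes u :: "'a::{alg_closed_field, field_char_0} poly"
  assumes "s \<noteq> 0"
  shows "\<not> (\<forall>x. (x - a)^2 + (poly u x - b)^2 = s^2)"
proof
  assume E: "\<forall>x. (x - a)^2 + (poly u x - b)^2 = s^2"
  obtain i :: 'a where i: "i^2 = -1"
    using nth_root_exists[of 2 "-1::'a"] by auto
  define P1 where "P1 = [:-a, 1:] + smult i (u - [:b:])"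
  define P2 where "P2 = [:-a, 1:] - smult i (u - [:b:])"
  have "poly (P1 * P2) x = poly [:s^2:] x" for x
  proof -
    have "poly (P1 * P2) x = (x - a)^2 - i^2 * (poly u x - b)^2"
      by (simp add: P1_def P2_def power2_eq_square algebra_simps)
    then show ?thesis
      using E i by simp
  qed
  then have P12: "P1 * P2 = [:s^2:]"
    by (simp add: poly_eq_poly_eq_iff[symmetric] fun_eq_iff)
  then have "P1 \<noteq> 0" "P2 \<noteq> 0"
    using assms by auto
  then have "degree P1 = 0" "degree P2 = 0"
    using degree_mult_eq[of P1 P2] P12 by simp_all
  then have "degree (P1 + P2) = 0"
    using degree_add_le_max[of P1 P2] by simp
  moreover have "X + Y + (X - Y) = X + X" for X Y :: "'a poly"
    by simp
  then have "P1 + P2 = [:-a, 1:] + [:-a, 1:]"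
    unfolding P1_def P2_def .
  then have "coeff (P1 + P2) 1 = 2"
    by simp
  ultimately show False
    using le_degree[of "P1 + P2" 1] by simp
qed

lemma irreducible_circle_poly:
  fixes A :: "'a::{alg_closed_field, field_char_0} \<times> 'a"
  assumes "s \<noteq> 0"
  shows "irreducible (circle_poly A s)"
proof (rule irreducibleI)
  show "circle_poly A s \<noteq> 0" "\<not> is_unit (circle_poly A s)"
    by (auto simp: circle_poly_def is_unit_poly_iff)
  fix f h
  assume fh: "circle_poly A s = f * h"
  have "f \<noteq> 0" "h \<noteq> 0"
    using fh \<open>circle_poly A s \<noteq> 0\<close> by auto
  then have deg: "degree f + degree h = 2"
    using arg_cong[OF fh, of degree] degree_mult_eq[of f h] by simp
  have "lead_coeff f * lead_coeff h = 1"
    using arg_cong[OF fh, of lead_coeff] lead_coeff_circle_poly[of A s] by (simp only: lead_coeff_mult)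
  then have units: "is_unit (lead_coeff f)" "is_unit (lead_coeff h)"
    by (metis dvdI mult.commute)+
  show "is_unit f \<or> is_unit h"
  proof (rule ccontr)
    assume "\<not> (is_unit f \<or> is_unit h)"
    moreover have "is_unit g" if "degree g = 0" "is_unit (lead_coeff g)" for g :: "'a poly poly"
      using that degree_0_id[of g] is_unit_const_poly_iff[of "coeff g 0"] by simp
    ultimately have "degree f \<noteq> 0" "degree h \<noteq> 0"
      using units by blast+
    then have "degree f = 1"
      using deg by linarith
    obtain c where c: "lead_coeff f = [:c:]" "c \<noteq> 0"
      using units(1) by (auto simp: is_unit_poly_iff dvd_field_iff)
    define u where "u = smult (- inverse c) (coeff f 0)"
    have "poly f u = coeff f 0 + [:c:] * u"
      using c \<open>degree f = 1\<close> by (simp add: poly_altdef atMost_Suc)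
    then have "poly f u = 0"
      using c(2) by (simp add: u_def)
    then have "poly (circle_poly A s) u = 0"
      using fh by simp
    then have "(x - fst A)^2 + (poly u x - snd A)^2 = s^2" for x
      using poly_poly_eq_eval2[of "circle_poly A s" u x] by (simp add: eval2_circle_poly sqdist_def)
    then show False
      using no_poly_graph_on_circle[OF assms] by blast
  qed
qed

lemma irreducible_zero_set_eq_circle:
  fixes q :: "'a::{alg_closed_field, field_char_0} poly poly"
  assumes "irreducible q" "s \<noteq> 0" "infinite (zero_set q \<inter> circle A s)"
  shows "zero_set q = circle A s"
proof -
  have "zclosure (zero_set q \<inter> circle A s) = zero_set q"
    using assms(1,3) by (intro zclosure_infinite_subset_zero_set) auto
  moreover have "zclosure (zero_set q \<inter> circle A s) = zero_set (circle_poly A s)"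
    using assms(3) by (intro zclosure_infinite_subset_zero_set irreducible_circle_poly assms(2))
      (auto simp: zero_set_circle_poly)
  ultimately show ?thesis
    by (simp add: zero_set_circle_poly)
qed

section \<open>Components of a conchoid\<close>

lemma infinite_nonisotropic_zero_set:
  fixes q :: "'a::{alg_closed_field, field_char_0} poly poly"
  assumes irr: "irreducible q" and "nonisotropic_part (zero_set q) A \<noteq> {}"
  shows "infinite {y \<in> zero_set q. sqdist A y \<noteq> 0}"
proof -
  have "\<not> q dvd circle_poly A 0"
  proof
    assume "q dvd circle_poly A 0"
    then obtain k where k: "circle_poly A 0 = q * k" ..
    have "sqdist A y = 0" if "y \<in> zero_set q" for y
      using that arg_cong[OF k, of "\<lambda>f. eval2 f y"] by (simp add: eval2_circle_poly)
    with assms(2) show False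
      by (auto simp: nonisotropic_part_eq)
  qed
  then have "finite (zero_set q \<inter> zero_set (circle_poly A 0))"
    by (rule finite_zero_set_Int_not_dvd[OF irr])
  moreover have "{y \<in> zero_set q. sqdist A y \<noteq> 0} = zero_set q - zero_set q \<inter> zero_set (circle_poly A 0)"
    by (auto simp: eval2_circle_poly)
  ultimately show ?thesis
    using Diff_infinite_finite infinite_zero_set[OF irr] by simp
qed

lemma finite_conchoid_preimage:
  fixes q :: "'a::{alg_closed_field, field_char_0} poly poly"
  assumes irr: "irreducible q" and "\<delta> \<noteq> 0" and "zero_set q \<noteq> circle A \<delta>"
  shows "finite {y \<in> zero_set q. sqdist A y \<noteq> 0 \<and> conchoid_rel A \<delta> x y}"
proof (cases "x = A")
  case True
  have "finite (zero_set q \<inter> circle A \<delta>)"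
    using irreducible_zero_set_eq_circle[OF irr \<open>\<delta> \<noteq> 0\<close>] assms(3) by blast
  moreover have "conchoid_rel A \<delta> A y \<Longrightarrow> y \<in> circle A \<delta>" for y
    by (simp add: conchoid_rel_def circle_def sqdist_def power2_commute)
  ultimately show ?thesis
    using True by (auto elim!: rev_finite_subset)
next
  case False
  then show ?thesis
    using finite_conchoid_rel_fibre[OF False \<open>\<delta> \<noteq> 0\<close>]
    by (auto elim!: rev_finite_subset simp: conchoid_rel_sym)
qed

text \<open>The points of \<open>D\<close> that are sent to one of the finitely many missed points are finitely
  many, and the remaining nonisotropic points of \<open>D\<close> are still Zariski dense in \<open>D\<close>.\<close>

lemma conchoid_subset_if_cofinite:
  fixes q :: "'a::{alg_closed_field, field_char_0} poly poly"
  assumes irr: "irreducible q" and D: "D = zero_set q" and "\<delta> \<noteq> 0"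
    and noniso: "nonisotropic_part D A \<noteq> {}" and "D \<noteq> circle A \<delta>"
    and "zclosed V" and fin: "finite (conchoid_points D A \<delta> - V)"
  shows "conchoid D A \<delta> \<subseteq> V"
proof -
  define Y where "Y = (\<Union>x \<in> conchoid_points D A \<delta> - V. {y \<in> D. sqdist A y \<noteq> 0 \<and> conchoid_rel A \<delta> x y})"
  define E where "E = {y \<in> D. sqdist A y \<noteq> 0} - Y"
  have "finite Y"
    unfolding Y_def D using fin finite_conchoid_preimage[OF irr \<open>\<delta> \<noteq> 0\<close>] assms(5) D by blast
  then have "infinite E"
    unfolding E_def using infinite_nonisotropic_zero_set[OF irr] noniso D by simp
  then have "zclosure E = D"
    unfolding D by (intro zclosure_infinite_subset_zero_set[OF irr]) (auto simp: E_def D)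
  have "conchoid_points E A \<delta> \<subseteq> V"
    by (auto simp: conchoid_points_def E_def Y_def)
  then have "zclosure (conchoid_points E A \<delta>) \<subseteq> V"
    using \<open>zclosed V\<close> by (rule zclosure_minimal)
  moreover have "conchoid_points D A \<delta> \<subseteq> zclosure (conchoid_points E A \<delta>)"
    using conchoid_points_zclosure[of E A \<delta>] \<open>zclosure E = D\<close> \<open>\<delta> \<noteq> 0\<close> by (auto simp: E_def)
  ultimately show ?thesis
    unfolding conchoid_eq_zclosure using \<open>zclosed V\<close> by (intro zclosure_minimal) auto
qed

lemma irred_component_conchoid_eq_zero_set:
  fixes q :: "'a::{alg_closed_field, field_char_0} poly poly"
  assumes irr: "irreducible q" and D: "D = zero_set q" and "\<delta> \<noteq> 0"
    and "nonisotropic_part D A \<noteq> {}" and "D \<noteq> circle A \<delta>"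
    and M: "irred_component M (conchoid D A \<delta>)"
  shows "\<exists>q'. irreducible q' \<and> M = zero_set q' \<and> infinite (M \<inter> conchoid_points D A \<delta>)"
proof -
  let ?P = "conchoid_points D A \<delta>"
  obtain H where "H \<noteq> 0" and H: "?P \<subseteq> zero_set H"
    using conchoid_points_subset_zero_set[OF irr _ \<open>\<delta> \<noteq> 0\<close>] D by blast
  obtain F where F: "finite F" "\<forall>p\<in>F. irreducible p" "zero_set H = (\<Union>p\<in>F. zero_set p)"
    using zero_set_eq_UN_irreducible[OF \<open>H \<noteq> 0\<close>] by blast
  define I where "I = {p \<in> F. infinite (?P \<inter> zero_set p)}"
  have "?P - (\<Union>p\<in>I. zero_set p) \<subseteq> (\<Union>p\<in>F - I. ?P \<inter> zero_set p)"
  proof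
    fix x
    assume x: "x \<in> ?P - (\<Union>p\<in>I. zero_set p)"
    then obtain p where "p \<in> F" "x \<in> zero_set p"
      using H F(3) by blast
    with x show "x \<in> (\<Union>p\<in>F - I. ?P \<inter> zero_set p)"
      by blast
  qed
  moreover have "finite (\<Union>p\<in>F - I. ?P \<inter> zero_set p)"
    using F(1) by (intro finite_UN_I) (auto simp: I_def)
  ultimately have fin: "finite (?P - (\<Union>p\<in>I. zero_set p))"
    by (rule finite_subset)
  have "finite I"
    using F(1) by (simp add: I_def)
  then have "zclosed (\<Union>p\<in>I. zero_set p)"
    by (rule zclosed_UN) blast
  with fin have "conchoid D A \<delta> \<subseteq> (\<Union>p\<in>I. zero_set p)"
    using conchoid_subset_if_cofinite[OF assms(1-5)] by blast
  moreover have M_irr: "zirreducible M" and M_sub: "M \<subseteq> conchoid D A \<delta>"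
    and M_max: "\<And>V. zirreducible V \<Longrightarrow> M \<subseteq> V \<Longrightarrow> V \<subseteq> conchoid D A \<delta> \<Longrightarrow> V = M"
    using M unfolding irred_component_def by blast+
  ultimately obtain p where p: "p \<in> I" "M \<subseteq> zero_set p"
    using zirreducible_subset_UN[OF \<open>finite I\<close> M_irr, of zero_set] by blast
  then have irr_p: "irreducible p" and inf_p: "infinite (?P \<inter> zero_set p)"
    using F(2) by (auto simp: I_def)
  have "zero_set p = zclosure (?P \<inter> zero_set p)"
    using zclosure_infinite_subset_zero_set[OF irr_p _ inf_p] by simp
  also have "\<dots> \<subseteq> conchoid D A \<delta>"
    unfolding conchoid_eq_zclosure by (rule zclosure_mono) blast
  finally have "zero_set p = M"
    using M_max[OF zirreducible_zero_set[OF irr_p] p(2)] by blast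
  then show ?thesis
    using irr_p inf_p by (auto simp: Int_commute)
qed

lemma infinite_nonisotropic_conchoid_points:
  fixes A :: "'a::field \<times> 'a"
  assumes "infinite (M \<inter> conchoid_points D A \<delta>)"
  shows "infinite {x \<in> M \<inter> conchoid_points D A \<delta>. sqdist A x \<noteq> 0}"
proof -
  have "M \<inter> conchoid_points D A \<delta> \<subseteq> insert A {x \<in> M \<inter> conchoid_points D A \<delta>. sqdist A x \<noteq> 0}"
    using isotropic_conchoid_point by blast
  with assms show ?thesis
    using finite_subset by blast
qed

lemma irred_component_conchoid_zero_set:
  fixes g q :: "'a::{alg_closed_field, field_char_0} poly poly"
  assumes "irreducible g" "\<delta> \<noteq> 0" "irreducible q" "zero_set q \<subseteq> conchoid (zero_set g) A \<delta>"
  shows "irred_component (zero_set q) (conchoid (zero_set g) A \<delta>)"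
proof -
  obtain H where "H \<noteq> 0" "conchoid (zero_set g) A \<delta> \<subseteq> zero_set H"
    using conchoid_subset_zero_set[OF assms(1) order.refl assms(2)] by blast
  then show ?thesis
    using irred_component_zero_set[OF assms(3,4)] by blast
qed

text \<open>The conchoid relation is symmetric and its fibres are finite, so \<open>E\<close> has infinitely many
  preimages on \<open>zero_set g\<close>, which are then dense in it.\<close>

lemma zero_set_subset_conchoid_back:
  fixes g :: "'a::{alg_closed_field, field_char_0} poly poly"
  assumes irr: "irreducible g" and "d \<noteq> 0" and "E \<subseteq> M" and E: "E \<subseteq> conchoid_points (zero_set g) A d"
    and E_noniso: "\<And>x. x \<in> E \<Longrightarrow> sqdist A x \<noteq> 0" and "infinite E"
  shows "zero_set g \<subseteq> conchoid M A d"
proof -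
  define Y where "Y = {y \<in> zero_set g. sqdist A y \<noteq> 0 \<and> (\<exists>x\<in>E. conchoid_rel A d x y)}"
  have "Y \<subseteq> conchoid_points M A d"
    using \<open>E \<subseteq> M\<close> E_noniso by (auto simp: Y_def conchoid_points_def conchoid_rel_sym)
  have "E \<subseteq> (\<Union>y\<in>Y. {x. conchoid_rel A d x y})"
  proof
    fix x
    assume "x \<in> E"
    then obtain y where "y \<in> zero_set g" "sqdist A y \<noteq> 0" "conchoid_rel A d x y"
      using E by (auto simp: conchoid_points_def)
    moreover from this \<open>x \<in> E\<close> have "y \<in> Y"
      unfolding Y_def by blast
    ultimately show "x \<in> (\<Union>y\<in>Y. {x. conchoid_rel A d x y})"
      by blast
  qed
  moreover have "finite {x. conchoid_rel A d x y}" if "y \<in> Y" for y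
  proof (rule finite_conchoid_rel_fibre[OF _ \<open>d \<noteq> 0\<close>])
    show "y \<noteq> A"
      using that sqdist_nonzero_imp_neq unfolding Y_def by blast
  qed
  ultimately have "infinite Y"
    using \<open>infinite E\<close> finite_subset by blast
  then have "zclosure Y = zero_set g"
    by (intro zclosure_infinite_subset_zero_set[OF irr]) (auto simp: Y_def)
  with \<open>Y \<subseteq> conchoid_points M A d\<close> show ?thesis
    unfolding conchoid_eq_zclosure using zclosure_mono by blast
qed

lemma conchoid_zclosure_subset_Un:
  fixes A :: "'a::{alg_closed_field, field_char_0} \<times> 'a"
  assumes E: "E \<subseteq> conchoid_points C A d" and E_noniso: "\<And>x. x \<in> E \<Longrightarrow> sqdist A x \<noteq> 0" and "d' \<noteq> 0"
  shows "conchoid (zclosure E) A d' \<subseteq> conchoid C A (d + d') \<union> conchoid C A (d - d')"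
proof -
  have "conchoid_points E A d' \<subseteq> conchoid_points C A (d + d') \<union> conchoid_points C A (d - d')"
  proof
    fix z
    assume "z \<in> conchoid_points E A d'"
    then obtain x where x: "x \<in> E" "sqdist A x \<noteq> 0" "conchoid_rel A d' z x"
      by (auto simp: conchoid_points_def)
    then obtain y where "y \<in> C" "sqdist A y \<noteq> 0" "conchoid_rel A d x y"
      using E by (auto simp: conchoid_points_def)
    then show "z \<in> conchoid_points C A (d + d') \<union> conchoid_points C A (d - d')"
      using conchoid_rel_compose[of A y d x d' z] x by (auto simp: conchoid_points_def)
  qed
  then have "zclosure (conchoid_points E A d') \<subseteq> conchoid C A (d + d') \<union> conchoid C A (d - d')"
    unfolding conchoid_eq_zclosure zclosure_Un[symmetric] by (rule zclosure_mono)
  then have "conchoid_points (zclosure E) A d' \<subseteq> conchoid C A (d + d') \<union> conchoid C A (d - d')"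
    using conchoid_points_zclosure[OF E_noniso \<open>d' \<noteq> 0\<close>] by blast
  moreover have "zclosed (conchoid C A (d + d') \<union> conchoid C A (d - d'))"
    unfolding conchoid_def by (intro zclosed_Un zclosed_zclosure)
  ultimately show ?thesis
    unfolding conchoid_eq_zclosure[of "zclosure E"] by (rule zclosure_minimal)
qed

lemma conchoid_circle_subset:
  fixes A :: "'a::field \<times> 'a"
  shows "conchoid (circle A s) A d \<subseteq> circle A (s + d) \<union> circle A (s - d)"
proof -
  have "conchoid_points (circle A s) A d \<subseteq> zero_set (circle_poly A (s + d) * circle_poly A (s - d))"
  proof
    fix x
    assume "x \<in> conchoid_points (circle A s) A d"
    then obtain y where y: "y \<in> circle A s" "sqdist A y \<noteq> 0" "conchoid_rel A d x y"
      by (auto simp: conchoid_points_def)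
    then obtain t where t: "x = ray_point A y t" "t^2 * sqdist A y = d^2"
      using conchoid_rel_iff_ray_point sqdist_nonzero_imp_neq by blast
    have "sqdist A y = s^2"
      using y(1) by (simp add: circle_def sqdist_def)
    then have "t * s = d \<or> t * s = -d"
      using t(2) by (simp add: power2_eq_iff flip: power_mult_distrib)
    moreover have "sqdist A x = (s + t * s)^2"
      using t(1) sqdist_ray_point[of A y t] \<open>sqdist A y = s^2\<close>
      by (simp add: power2_eq_square algebra_simps)
    ultimately show "x \<in> zero_set (circle_poly A (s + d) * circle_poly A (s - d))"
      by (auto simp: eval2_circle_poly)
  qed
  then have "conchoid (circle A s) A d \<subseteq> zero_set (circle_poly A (s + d) * circle_poly A (s - d))"
    unfolding conchoid_eq_zclosure by (rule zclosure_minimal) auto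
  then show ?thesis
    by (auto simp: zero_set_circle_poly[symmetric])
qed

lemma not_circle_if_conchoid_contains:
  fixes g :: "'a::{alg_closed_field, field_char_0} poly poly"
  assumes irr: "irreducible g" and "\<forall>r. zero_set g \<noteq> circle A r"
    and "zero_set g \<subseteq> conchoid N A d" and "d^2 \<noteq> d'^2"
  shows "N \<noteq> circle A d'"
proof
  assume "N = circle A d'"
  then have "zero_set g \<subseteq> zero_set (circle_poly A (d' + d)) \<union> zero_set (circle_poly A (d' - d))"
    using assms(3) conchoid_circle_subset[of A d' d] by (auto simp: zero_set_circle_poly)
  then have "zero_set g \<subseteq> zero_set (circle_poly A (d' + d)) \<or> zero_set g \<subseteq> zero_set (circle_poly A (d' - d))"
    by (intro zirreducible_subset_Un[OF zirreducible_zero_set[OF irr]] zclosed_zero_set)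
  then obtain r where "r \<in> {d' + d, d' - d}" "zero_set g \<subseteq> circle A r"
    unfolding zero_set_circle_poly by blast
  moreover have "d' + d \<noteq> 0" "d' - d \<noteq> 0"
    using assms(4) by (auto simp: add_eq_0_iff)
  then have "r \<noteq> 0"
    using calculation(1) by auto
  ultimately have "zero_set g = circle A r"
    using irreducible_zero_set_eq_circle[OF irr] infinite_zero_set[OF irr] by (simp add: Int_absorb2)
  with assms(2) show False
    by blast
qed

lemma conchoid_component_compose:
  fixes g q :: "'a::{alg_closed_field, field_char_0} poly poly"
  assumes irr_g: "irreducible g" and not_circle: "\<forall>r. zero_set g \<noteq> circle A r"
    and irr_q: "irreducible q" and E: "E \<subseteq> zero_set q" "E \<subseteq> conchoid_points (zero_set g) A d"
    and E_noniso: "\<And>x. x \<in> E \<Longrightarrow> sqdist A x \<noteq> 0" and "infinite E"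
    and "d \<noteq> 0" "d' \<noteq> 0" "d^2 \<noteq> d'^2" and M': "irred_component M' (conchoid (zero_set q) A d')"
  shows "irred_component M' (conchoid (zero_set g) A (d + d')) \<or>
    irred_component M' (conchoid (zero_set g) A (d - d'))"
proof -
  have "zero_set g \<subseteq> conchoid (zero_set q) A d"
    using zero_set_subset_conchoid_back[OF irr_g \<open>d \<noteq> 0\<close> E(1,2) E_noniso \<open>infinite E\<close>] .
  then have "zero_set q \<noteq> circle A d'"
    using not_circle_if_conchoid_contains[OF irr_g not_circle _ \<open>d^2 \<noteq> d'^2\<close>] by blast
  moreover have "nonisotropic_part (zero_set q) A \<noteq> {}"
    using nonisotropic_part_nonempty[OF E(1) E_noniso] \<open>infinite E\<close> by auto
  ultimately obtain q' where "irreducible q'" "M' = zero_set q'"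
    using irred_component_conchoid_eq_zero_set[OF irr_q refl \<open>d' \<noteq> 0\<close> _ _ M'] by blast
  have "zclosure E = zero_set q"
    using zclosure_infinite_subset_zero_set[OF irr_q E(1) \<open>infinite E\<close>] .
  then have "conchoid (zero_set q) A d' \<subseteq> conchoid (zero_set g) A (d + d') \<union> conchoid (zero_set g) A (d - d')"
    using conchoid_zclosure_subset_Un[OF E(2) E_noniso \<open>d' \<noteq> 0\<close>] by simp
  then have "M' \<subseteq> conchoid (zero_set g) A (d + d') \<or> M' \<subseteq> conchoid (zero_set g) A (d - d')"
    using M' unfolding irred_component_def conchoid_def
    by (intro zirreducible_subset_Un zclosed_zclosure) auto
  moreover have "d + d' \<noteq> 0" "d - d' \<noteq> 0"
    using \<open>d^2 \<noteq> d'^2\<close> by (auto simp: add_eq_0_iff)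
  ultimately show ?thesis
    using irred_component_conchoid_zero_set[OF irr_g _ \<open>irreducible q'\<close>] \<open>M' = zero_set q'\<close> by blast
qed

theorem proposition2:
  fixes g :: "'a::{alg_closed_field, field_char_0} poly poly"
    and C M :: "('a \<times> 'a) set"
    and A :: "'a \<times> 'a" and d :: 'a
  assumes "irreducible g"
    and "C = zero_set g"
    and "d \<noteq> 0"
    and "nonisotropic_part C A \<noteq> {}"
    and "\<forall>r. C \<noteq> circle A r"
    and "irred_component M (conchoid C A d)"
  shows "nonisotropic_part M A \<noteq> {} \<and>
         irred_component C (conchoid M A d) \<and>
         (\<forall>d' M'. d' \<noteq> 0 \<and> d^2 \<noteq> d'^2 \<and> irred_component M' (conchoid M A d') \<longrightarrow>
           irred_component M' (conchoid C A (d + d')) \<or> irred_component M' (conchoid C A (d - d')))"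
proof -
  obtain q where q: "irreducible q" "M = zero_set q" and "infinite (M \<inter> conchoid_points C A d)"
    using irred_component_conchoid_eq_zero_set[OF assms(1-4) _ assms(6)] assms(5) by blast
  define E where "E = {x \<in> M \<inter> conchoid_points C A d. sqdist A x \<noteq> 0}"
  have "infinite E"
    unfolding E_def by (rule infinite_nonisotropic_conchoid_points) fact
  have E: "E \<subseteq> zero_set q" "E \<subseteq> conchoid_points (zero_set g) A d" "\<And>x. x \<in> E \<Longrightarrow> sqdist A x \<noteq> 0"
    using q(2) assms(2) by (auto simp: E_def)
  have "nonisotropic_part M A \<noteq> {}"
    using nonisotropic_part_nonempty[OF _ E(3)] E(1) q(2) \<open>infinite E\<close> by auto
  moreover have "irred_component C (conchoid M A d)"
    using irred_component_conchoid_zero_set[OF q(1) assms(3,1)] assms(2) q(2)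
      zero_set_subset_conchoid_back[OF assms(1,3) E(1,2,3) \<open>infinite E\<close>] by simp
  moreover have "\<forall>d' M'. d' \<noteq> 0 \<and> d^2 \<noteq> d'^2 \<and> irred_component M' (conchoid M A d') \<longrightarrow>
      irred_component M' (conchoid C A (d + d')) \<or> irred_component M' (conchoid C A (d - d'))"
    using conchoid_component_compose[OF assms(1) _ q(1) E \<open>infinite E\<close> assms(3)] assms(2,5) q(2)
    by blast
  ultimately show ?thesis
    by blast
qed

end
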